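(* Suppose $\mathcal R\subset\mathcal G$ has Property 2. Then the kernel of the seminorm $\|\cdot\|_{\mathcal R}$ on $U_{\mathrm{per}}$ is $U_{\mathrm{iso},0,0}\cap U_{\mathrm{per}}$.
   Context: Euclidean group: $\mathrm E(n)$ consists of pairs $(A|b)$, $A\in\mathrm O(n)$, $b\in\mathbb R^n$, acting by $(A|b)\cdot x=Ax+b$, product $(A_1|b_1)(A_2|b_2)=(A_1A_2|b_1+A_1b_2)$; $\mathrm{rot}(A|b)=A$. Standing setting: $d=d_1+d_2$; $\mathcal S<\mathrm E(d_2)$ is a space group with translation subgroup $\mathcal T_{\mathcal S}$; $A\oplus(B|b)=(\mathrm{diag}(A,B)|(0,b))$; $\mathcal G$ is a discrete subgroup of $\mathrm E(d)$ contained in $\{A\oplus s:A\in\mathrm O(d_1),s\in\mathcal S\}$ projecting onto $\mathcal S$; $\mathcal T\subset\mathcal G$ maps bijectively onto $\mathcal T_{\mathcal S}$. There is $m_0\in\mathbb N$ such that $\mathcal T^N=\{t^N:t\in\mathcal T\}$ is a normal subgroup iff $N\in\mathcal M=m_0\mathbb N$, then isomorphic to $\mathbb Z^{d_2}$ of finite index; $\mathcal C_N$ is a fixed set of representatives of $\mathcal G/\mathcal T^N$. $U_{\mathrm{per}}$: maps $u:\mathcal G\to\mathbb R^d$ that are $\mathcal T^N$-periodic ($u(gt)=u(g)$ for $t\in\mathcal T^N$) for some $N\in\mathcal M$. $x_0\in\mathbb R^d$ with $g\mapsto g\cdot x_0$ injective; $d_{\mathrm{aff}}=\dim\mathrm{aff}(\mathcal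 G\cdot x_0)$; assumed $\mathcal G\cdot x_0\subset\{0_{d-d_{\mathrm{aff}}}\}\times\mathbb R^{d_{\mathrm{aff}}}$ and $\mathcal G$ acts trivially on $\mathbb R^{d-d_{\mathrm{aff}}}\times\{0\}$. For $\mathcal R\subset\mathcal G$, $U_{\mathrm{iso}}(\mathcal R)$ is the set of $v:\mathcal R\to\mathbb R^d$ with $a\in\mathbb R^d$, $S\in\mathrm{Skew}(d)$ such that $\mathrm{rot}(g)v(g)=a+S(g\cdot x_0-x_0)$ for all $g\in\mathcal R$. For finite $\mathcal R$ and $\mathcal T^N$-periodic $u$: $\|u\|_{\mathcal R}=\big(\frac1{|\mathcal C_N|}\sum_{g\in\mathcal C_N}\mathrm{dist}(u(g\,\cdot)|_{\mathcal R},U_{\mathrm{iso}}(\mathcal R))^2\big)^{1/2}$ (Euclidean distance in $(\mathbb R^d)^{\mathcal R}$). $U_{\mathrm{iso},0,0}$ is the set of $u:\mathcal G\to\mathbb R^d$ with $a\in\mathbb R^d$, $S\in\mathrm{Skew}(d_1)$ such that $\mathrm{rot}(g)u(g)=a+(S\oplus0_{d_2\times d_2})(g\cdot x_0-x_0)$ for all $g\in\mathcal G$. Property 1: $\mathcal R$ finite, $\mathrm{id}\in\mathcal R$, $\mathrm{aff}(\mathcal R\cdot x_0)=\mathrm{aff}(\mathcal G\cdot x_0)$. Property 2: $\mathcal R$ finite, and there are $\mathcal R',\mathcal R''$ with $\mathrm{id}\in\mathcal R'$, $\mathcal R'$ generating $\mathcal G$, $\mathcal R''$ with Property 1, and $\{gh:g\in\mathcal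 R',h\in\mathcal R''\}\subset\mathcal R$. *)

theory Defs
  imports Complex_Main "Jordan_Normal_Form.Matrix" "Jordan_Normal_Form.Determinant"
begin

type_synonym euc = "real mat \<times> real vec"

definition orth_group :: "nat \<Rightarrow> real mat set" where
  "orth_group n = {A. A \<in> carrier_mat n n \<and> transpose_mat A * A = 1\<^sub>m n}"

definition euc_group :: "nat \<Rightarrow> euc set" where
  "euc_group n = {(A, b). A \<in> orth_group n \<and> b \<in> carrier_vec n}"

definition euc_mult :: "euc \<Rightarrow> euc \<Rightarrow> euc" where
  "euc_mult g h = (fst g * fst h, snd g + fst g *\<^sub>v snd h)"

definition euc_id :: "nat \<Rightarrow> euc" where
  "euc_id n = (1\<^sub>m n, 0\<^sub>v n)"

definition euc_inv :: "euc \<Rightarrow> euc" where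
  "euc_inv g = (transpose_mat (fst g), - (transpose_mat (fst g) *\<^sub>v snd g))"

definition euc_act :: "euc \<Rightarrow> real vec \<Rightarrow> real vec" where
  "euc_act g x = fst g *\<^sub>v x + snd g"

definition rot :: "euc \<Rightarrow> real mat" where
  "rot g = fst g"

primrec euc_pow :: "nat \<Rightarrow> euc \<Rightarrow> nat \<Rightarrow> euc" where
  "euc_pow n g 0 = euc_id n"
| "euc_pow n g (Suc k) = euc_mult g (euc_pow n g k)"

definition euc_dist :: "nat \<Rightarrow> euc \<Rightarrow> euc \<Rightarrow> real" where
  "euc_dist n g h = sqrt ((\<Sum>i<n. \<Sum>j<n. (fst g $$ (i,j) - fst h $$ (i,j))\<^sup>2)
                        + (\<Sum>i<n. (snd g $ i - snd h $ i)\<^sup>2))"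

definition euc_subgroup :: "nat \<Rightarrow> euc set \<Rightarrow> bool" where
  "euc_subgroup n H \<longleftrightarrow> H \<subseteq> euc_group n \<and> euc_id n \<in> H
     \<and> (\<forall>g\<in>H. \<forall>h\<in>H. euc_mult g h \<in> H) \<and> (\<forall>g\<in>H. euc_inv g \<in> H)"

definition euc_discrete_subgroup :: "nat \<Rightarrow> euc set \<Rightarrow> bool" where
  "euc_discrete_subgroup n H \<longleftrightarrow> euc_subgroup n H
     \<and> (\<forall>g\<in>H. \<exists>\<epsilon>>0. \<forall>h\<in>H. euc_dist n g h < \<epsilon> \<longrightarrow> h = g)"

definition euc_normal :: "nat \<Rightarrow> euc set \<Rightarrow> euc set \<Rightarrow> bool" where
  "euc_normal n K H \<longleftrightarrow> euc_subgroup n K \<and> K \<subseteq> H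
     \<and> (\<forall>g\<in>H. \<forall>k\<in>K. euc_mult (euc_mult g k) (euc_inv g) \<in> K)"

inductive_set euc_gen :: "nat \<Rightarrow> euc set \<Rightarrow> euc set" for n X where
  gen_id: "euc_id n \<in> euc_gen n X"
| gen_base: "x \<in> X \<Longrightarrow> x \<in> euc_gen n X"
| gen_mult: "g \<in> euc_gen n X \<Longrightarrow> h \<in> euc_gen n X \<Longrightarrow> euc_mult g h \<in> euc_gen n X"
| gen_inv: "g \<in> euc_gen n X \<Longrightarrow> euc_inv g \<in> euc_gen n X"

definition transl_subgroup :: "nat \<Rightarrow> euc set \<Rightarrow> euc set" where
  "transl_subgroup n H = {g \<in> H. fst g = 1\<^sub>m n}"

definition space_group :: "nat \<Rightarrow> euc set \<Rightarrow> bool" where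
  "space_group n S \<longleftrightarrow> euc_discrete_subgroup n S
     \<and> (\<exists>B \<in> carrier_mat n n. det B \<noteq> 0 \<and>
          snd ` transl_subgroup n S
            = {B *\<^sub>v z | z. z \<in> carrier_vec n \<and> (\<forall>i<n. z $ i \<in> \<int>)})"

definition dsum :: "nat \<Rightarrow> nat \<Rightarrow> real mat \<Rightarrow> euc \<Rightarrow> euc" where
  "dsum d1 d2 A s = (four_block_mat A (0\<^sub>m d1 d2) (0\<^sub>m d2 d1) (fst s), 0\<^sub>v d1 @\<^sub>v snd s)"

definition proj2 :: "nat \<Rightarrow> nat \<Rightarrow> euc \<Rightarrow> euc" where
  "proj2 d1 d2 g = (mat d2 d2 (\<lambda>(i,j). fst g $$ (d1 + i, d1 + j)),
                    vec d2 (\<lambda>i. snd g $ (d1 + i)))"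

definition pow_set :: "nat \<Rightarrow> euc set \<Rightarrow> nat \<Rightarrow> euc set" where
  "pow_set n T N = {euc_pow n t N | t. t \<in> T}"

definition aff_hull :: "nat \<Rightarrow> real vec set \<Rightarrow> real vec set" where
  "aff_hull n X = {y \<in> carrier_vec n. \<exists>F c. finite F \<and> F \<subseteq> X \<and> sum c F = 1
       \<and> (\<forall>i<n. y $ i = (\<Sum>x\<in>F. c x * x $ i))}"

definition aff_indep :: "nat \<Rightarrow> real vec set \<Rightarrow> bool" where
  "aff_indep n F \<longleftrightarrow> (\<forall>c. sum c F = 0 \<and> (\<forall>i<n. (\<Sum>x\<in>F. c x * x $ i) = 0)
       \<longrightarrow> (\<forall>x\<in>F. c x = 0))"

definition aff_dim :: "nat \<Rightarrow> real vec set \<Rightarrow> nat" where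
  "aff_dim n X = (GREATEST k. \<exists>F \<subseteq> X. finite F \<and> card F = Suc k \<and> aff_indep n F)"

definition standing_setting ::
  "nat \<Rightarrow> nat \<Rightarrow> euc set \<Rightarrow> euc set \<Rightarrow> euc set \<Rightarrow> nat \<Rightarrow> (nat \<Rightarrow> euc set)
     \<Rightarrow> real vec \<Rightarrow> nat \<Rightarrow> bool" where
  "standing_setting d1 d2 S G T m0 C x0 daff \<longleftrightarrow>
     space_group d2 S
   \<and> euc_discrete_subgroup (d1 + d2) G
   \<and> G \<subseteq> {dsum d1 d2 A s | A s. A \<in> orth_group d1 \<and> s \<in> S}
   \<and> (\<forall>s\<in>S. \<exists>A\<in>orth_group d1. dsum d1 d2 A s \<in> G)
   \<and> T \<subseteq> G \<and> bij_betw (proj2 d1 d2) T (transl_subgroup d2 S)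
   \<and> m0 \<ge> 1
   \<and> (\<forall>N\<ge>1. euc_normal (d1 + d2) (pow_set (d1 + d2) T N) G \<longleftrightarrow> m0 dvd N)
   \<and> (\<forall>N\<ge>1. m0 dvd N \<longrightarrow>
        C N \<subseteq> G \<and> finite (C N)
      \<and> (\<forall>g\<in>G. \<exists>!c\<in>C N. \<exists>t\<in>pow_set (d1 + d2) T N. g = euc_mult c t))
   \<and> x0 \<in> carrier_vec (d1 + d2)
   \<and> inj_on (\<lambda>g. euc_act g x0) G
   \<and> daff = aff_dim (d1 + d2) ((\<lambda>g. euc_act g x0) ` G)
   \<and> (\<forall>g\<in>G. \<forall>i < d1 + d2 - daff. euc_act g x0 $ i = 0)
   \<and> (\<forall>g\<in>G. \<forall>y\<in>carrier_vec (d1 + d2).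
        (\<forall>i. d1 + d2 - daff \<le> i \<and> i < d1 + d2 \<longrightarrow> y $ i = 0) \<longrightarrow> rot g *\<^sub>v y = y)"

definition periodic :: "nat \<Rightarrow> euc set \<Rightarrow> euc set \<Rightarrow> nat \<Rightarrow> (euc \<Rightarrow> real vec) \<Rightarrow> bool" where
  "periodic d G T N u \<longleftrightarrow> (\<forall>g\<in>G. u g \<in> carrier_vec d)
     \<and> (\<forall>g\<in>G. \<forall>t\<in>pow_set d T N. u (euc_mult g t) = u g)"

definition U_per :: "nat \<Rightarrow> euc set \<Rightarrow> euc set \<Rightarrow> nat \<Rightarrow> (euc \<Rightarrow> real vec) set" where
  "U_per d G T m0 = {u. \<exists>N\<ge>1. m0 dvd N \<and> periodic d G T N u}"

definition skew :: "nat \<Rightarrow> real mat set" where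
  "skew n = {S \<in> carrier_mat n n. transpose_mat S = - S}"

definition U_iso :: "nat \<Rightarrow> real vec \<Rightarrow> euc set \<Rightarrow> (euc \<Rightarrow> real vec) set" where
  "U_iso d x0 R = {v. (\<forall>g\<in>R. v g \<in> carrier_vec d) \<and>
      (\<exists>a\<in>carrier_vec d. \<exists>S\<in>skew d.
         \<forall>g\<in>R. rot g *\<^sub>v v g = a + S *\<^sub>v (euc_act g x0 - x0))}"

definition U_iso00 :: "nat \<Rightarrow> nat \<Rightarrow> real vec \<Rightarrow> euc set \<Rightarrow> (euc \<Rightarrow> real vec) set" where
  "U_iso00 d1 d2 x0 G = {u. (\<forall>g\<in>G. u g \<in> carrier_vec (d1 + d2)) \<and>
      (\<exists>a\<in>carrier_vec (d1 + d2). \<exists>S\<in>skew d1.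
         \<forall>g\<in>G. rot g *\<^sub>v u g
            = a + four_block_mat S (0\<^sub>m d1 d2) (0\<^sub>m d2 d1) (0\<^sub>m d2 d2) *\<^sub>v (euc_act g x0 - x0))}"

definition dist_Uiso :: "nat \<Rightarrow> real vec \<Rightarrow> euc set \<Rightarrow> (euc \<Rightarrow> real vec) \<Rightarrow> real" where
  "dist_Uiso d x0 R w =
     Inf {sqrt (\<Sum>h\<in>R. \<Sum>i<d. (w h $ i - v h $ i)\<^sup>2) | v. v \<in> U_iso d x0 R}"

definition seminorm_R ::
  "nat \<Rightarrow> real vec \<Rightarrow> euc set \<Rightarrow> euc set \<Rightarrow> nat \<Rightarrow> (euc \<Rightarrow> real vec) \<Rightarrow> real" where
  "seminorm_R d x0 R C_N N u =
     sqrt (1 / real (card C_N) * (\<Sum>g\<in>C_N. (dist_Uiso d x0 R (\<lambda>h. u (euc_mult g h)))\<^sup>2))"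

definition property1 :: "nat \<Rightarrow> euc set \<Rightarrow> real vec \<Rightarrow> euc set \<Rightarrow> bool" where
  "property1 d G x0 R \<longleftrightarrow> finite R \<and> R \<subseteq> G \<and> euc_id d \<in> R
     \<and> aff_hull d ((\<lambda>g. euc_act g x0) ` R) = aff_hull d ((\<lambda>g. euc_act g x0) ` G)"

definition property2 :: "nat \<Rightarrow> euc set \<Rightarrow> real vec \<Rightarrow> euc set \<Rightarrow> bool" where
  "property2 d G x0 R \<longleftrightarrow> finite R \<and> R \<subseteq> G \<and>
     (\<exists>R' R''. R' \<subseteq> G \<and> euc_id d \<in> R' \<and> euc_gen d R' = G \<and> property1 d G x0 R''
        \<and> {euc_mult g h | g h. g \<in> R' \<and> h \<in> R''} \<subseteq> R)"

end

theory Submission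
  imports Defs
begin

text \<open>
  The seminorm vanishes iff on every translate \<open>g R\<close>, \<open>g \<in> C N\<close>, the displacement is an
  infinitesimal isometry: \<open>U_iso R\<close> is a linear image of a finite-dimensional coefficient
  space, hence closed, so distance zero means membership. Periodicity together with
  normality of \<open>T\<^sup>N\<close> extends this to every \<open>g \<in> G\<close>.

  Read in the global frame, the infinitesimal isometries of \<open>g R\<close> and of \<open>g r R\<close>
  (\<open>r \<in> R'\<close>) agree on \<open>g r R''\<close>, whose orbit of \<open>x0\<close> affinely spans the whole orbit
  \<open>G x0\<close> by Property 1. Since \<open>R'\<close> generates \<open>G\<close>, a single pair \<open>(a, W)\<close> describes \<open>u\<close> on
  all of \<open>G\<close>. Along the powers of a lattice translation in \<open>T\<^sup>N\<close> the displacement is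
  constant, while a nonzero \<open>W\<close> applied to the lattice vector would make the right-hand
  side grow linearly; so \<open>W\<close> annihilates the lattice directions of \<open>\<real>\<^bsup>d2\<^esup>\<close> and, being
  skew, has the form \<open>S \<oplus> 0\<close>. Conversely a global infinitesimal isometry of this form
  restricts to one on every translate.
\<close>

lemma mult_mat_vec_uminus:
  "A \<in> carrier_mat m n \<Longrightarrow> v \<in> carrier_vec n \<Longrightarrow> (A :: 'a :: ring mat) *\<^sub>v (- v) = - (A *\<^sub>v v)"
  by (intro eq_vecI) auto

lemma index_mult_mat_vec_sum:
  "A \<in> carrier_mat m n \<Longrightarrow> v \<in> carrier_vec n \<Longrightarrow> i < m \<Longrightarrow>
   (A *\<^sub>v v) $ i = (\<Sum>k<n. A $$ (i,k) * v $ k)"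
  by (auto simp: scalar_prod_def lessThan_atLeast0 intro!: sum.cong)

lemma euc_groupD:
  assumes "g \<in> euc_group d"
  shows "fst g \<in> carrier_mat d d" "snd g \<in> carrier_vec d"
    "transpose_mat (fst g) * fst g = 1\<^sub>m d" "fst g * transpose_mat (fst g) = 1\<^sub>m d"
proof -
  obtain A b where g: "g = (A, b)" by (cases g)
  have A: "A \<in> carrier_mat d d" "b \<in> carrier_vec d" "transpose_mat A * A = 1\<^sub>m d"
    using assms unfolding g euc_group_def orth_group_def by blast+
  then have "A * transpose_mat A = 1\<^sub>m d"
    using mat_mult_left_right_inverse[of "transpose_mat A" d A] by simp
  with A show "fst g \<in> carrier_mat d d" "snd g \<in> carrier_vec d"
    "transpose_mat (fst g) * fst g = 1\<^sub>m d" "fst g * transpose_mat (fst g) = 1\<^sub>m d"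
    unfolding g by simp_all
qed

lemma euc_id_closed: "euc_id d \<in> euc_group d"
  by (simp add: euc_group_def orth_group_def euc_id_def)

lemma euc_act_carrier: "g \<in> euc_group d \<Longrightarrow> x \<in> carrier_vec d \<Longrightarrow> euc_act g x \<in> carrier_vec d"
  using euc_groupD(1,2)[of g d] by (simp add: euc_act_def)

lemma rot_carrier: "g \<in> euc_group d \<Longrightarrow> rot g \<in> carrier_mat d d"
  using euc_groupD(1) by (simp add: rot_def)

lemma euc_inv_closed:
  assumes "g \<in> euc_group d"
  shows "euc_inv g \<in> euc_group d"
  using euc_groupD[OF assms] by (simp add: euc_group_def orth_group_def euc_inv_def)

lemma euc_mult_closed:
  assumes "g \<in> euc_group d" "h \<in> euc_group d"
  shows "euc_mult g h \<in> euc_group d"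
proof -
  note G = euc_groupD[OF assms(1)] and H = euc_groupD[OF assms(2)]
  have "transpose_mat (fst g * fst h) * (fst g * fst h)
      = transpose_mat (fst h) * ((transpose_mat (fst g) * fst g) * fst h)"
    using G(1) H(1) by (simp add: transpose_mult[of _ d d _ d] assoc_mult_mat[of _ d d _ d _ d])
  also have "\<dots> = 1\<^sub>m d"
    by (simp only: G(3) left_mult_one_mat[OF H(1)] H(3))
  finally show ?thesis
    using G H by (simp add: euc_group_def orth_group_def euc_mult_def)
qed

lemma euc_pow_closed: "g \<in> euc_group d \<Longrightarrow> euc_pow d g n \<in> euc_group d"
  by (induction n) (simp_all add: euc_id_closed euc_mult_closed)

lemma rot_mult: "rot (euc_mult g h) = rot g * rot h"
  by (simp add: rot_def euc_mult_def)

lemma euc_mult_assoc: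
  assumes "g \<in> euc_group d" "h \<in> euc_group d" "k \<in> euc_group d"
  shows "euc_mult (euc_mult g h) k = euc_mult g (euc_mult h k)"
  using euc_groupD[OF assms(1)] euc_groupD[OF assms(2)] euc_groupD[OF assms(3)]
  by (auto simp: euc_mult_def assoc_mult_mat[of _ d d _ d _ d] mult_add_distrib_mat_vec[of _ d d]
      assoc_add_vec[of _ d])

lemma euc_act_mult:
  assumes "g \<in> euc_group d" "h \<in> euc_group d" "x \<in> carrier_vec d"
  shows "euc_act (euc_mult g h) x = euc_act g (euc_act h x)"
  using euc_groupD[OF assms(1)] euc_groupD[OF assms(2)] assms(3)
  by (auto simp: euc_act_def euc_mult_def mult_add_distrib_mat_vec[of _ d d] intro!: eq_vecI)

lemma euc_id_mult: "g \<in> euc_group d \<Longrightarrow> euc_mult (euc_id d) g = g"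
  using euc_groupD(1,2)[of g d] by (auto simp: euc_mult_def euc_id_def)

lemma euc_mult_id: "g \<in> euc_group d \<Longrightarrow> euc_mult g (euc_id d) = g"
  using euc_groupD[of g d] by (cases g) (auto simp: euc_mult_def euc_id_def intro!: eq_vecI)

lemma orth_transpose_mult_cancel:
  assumes "g \<in> euc_group d" "v \<in> carrier_vec d"
  shows "transpose_mat (rot g) *\<^sub>v (rot g *\<^sub>v v) = v"
  using euc_groupD[OF assms(1)] assms(2)
  by (simp add: rot_def assoc_mult_mat_vec[symmetric, of _ d d _ d] del: assoc_mult_mat_vec)

lemma orth_mult_transpose_cancel:
  assumes "g \<in> euc_group d" "v \<in> carrier_vec d"
  shows "rot g *\<^sub>v (transpose_mat (rot g) *\<^sub>v v) = v"
  using euc_groupD[OF assms(1)] assms(2)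
  by (simp add: rot_def assoc_mult_mat_vec[symmetric, of _ d d _ d] del: assoc_mult_mat_vec)

lemma euc_inv_right:
  assumes "g \<in> euc_group d"
  shows "euc_mult g (euc_inv g) = euc_id d"
  using euc_groupD[OF assms] orth_mult_transpose_cancel[OF assms euc_groupD(2)[OF assms]]
  by (auto simp: euc_mult_def euc_inv_def euc_id_def rot_def mult_mat_vec_uminus[of _ d d])

lemma euc_inv_left:
  assumes "g \<in> euc_group d"
  shows "euc_mult (euc_inv g) g = euc_id d"
  using euc_groupD[OF assms] by (auto simp: euc_mult_def euc_inv_def euc_id_def)

lemma euc_inv_inv:
  assumes "g \<in> euc_group d"
  shows "euc_inv (euc_inv g) = g"
  using euc_groupD[OF assms] orth_mult_transpose_cancel[OF assms euc_groupD(2)[OF assms]]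
  by (cases g) (auto simp: euc_inv_def rot_def mult_mat_vec_uminus[of _ d d])

lemma euc_act_mult_diff:
  assumes "g \<in> euc_group d" "h \<in> euc_group d" "x0 \<in> carrier_vec d"
  shows "euc_act (euc_mult g h) x0 - x0 = rot g *\<^sub>v (euc_act h x0 - x0) + (euc_act g x0 - x0)"
  using euc_groupD[OF assms(1)] euc_act_carrier[OF assms(2,3)] assms(3)
  by (auto simp: euc_act_mult[OF assms] rot_def mult_minus_distrib_mat_vec[of _ d d]
      euc_act_def[of g] intro!: eq_vecI)

lemma euc_subgroupD:
  assumes "euc_subgroup d G"
  shows "G \<subseteq> euc_group d" "euc_id d \<in> G" "\<And>g h. g \<in> G \<Longrightarrow> h \<in> G \<Longrightarrow> euc_mult g h \<in> G"
    "\<And>g. g \<in> G \<Longrightarrow> euc_inv g \<in> G"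
  using assms unfolding euc_subgroup_def by auto

lemma euc_subgroup_pow_closed: "euc_subgroup d K \<Longrightarrow> M \<in> K \<Longrightarrow> euc_pow d M n \<in> K"
  by (induction n) (auto simp: euc_subgroup_def)

section \<open>Finite-dimensional spans are closed\<close>

definition perp_proj :: "'i set \<Rightarrow> ('i \<Rightarrow> real) \<Rightarrow> ('i \<Rightarrow> real) \<Rightarrow> 'i \<Rightarrow> real" where
  "perp_proj I q f x = f x - (\<Sum>y\<in>I. f y * q y) / (\<Sum>y\<in>I. q y * q y) * q x"

lemma sum_sq_perp_proj_le: "(\<Sum>x\<in>I. (perp_proj I q f x)\<^sup>2) \<le> (\<Sum>x\<in>I. (f x)\<^sup>2)"
proof -
  define a where "a = (\<Sum>y\<in>I. f y * q y)"
  define b where "b = (\<Sum>y\<in>I. q y * q y)"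
  have "b \<ge> 0" unfolding b_def by (simp add: sum_nonneg)
  have "(\<Sum>x\<in>I. (perp_proj I q f x)\<^sup>2)
      = (\<Sum>x\<in>I. (f x)\<^sup>2 - 2 * (a / b) * (f x * q x) + (a / b)\<^sup>2 * (q x * q x))"
    unfolding perp_proj_def a_def[symmetric] b_def[symmetric]
    by (intro sum.cong) (simp_all add: power2_eq_square algebra_simps)
  also have "\<dots> = (\<Sum>x\<in>I. (f x)\<^sup>2) - 2 * (a / b) * a + (a / b)\<^sup>2 * b"
    by (simp add: a_def b_def sum.distrib sum_subtractf sum_distrib_left)
  also have "\<dots> = (\<Sum>x\<in>I. (f x)\<^sup>2) - a\<^sup>2 / b"
    by (cases "b = 0") (simp_all add: power2_eq_square field_simps)
  also have "\<dots> \<le> (\<Sum>x\<in>I. (f x)\<^sup>2)"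
    using \<open>b \<ge> 0\<close> by simp
  finally show ?thesis .
qed

lemma perp_proj_diff: "perp_proj I q (\<lambda>x. f x - g x) x = perp_proj I q f x - perp_proj I q g x"
  by (simp add: perp_proj_def left_diff_distrib sum_subtractf diff_divide_distrib)

lemma perp_proj_sum:
  "perp_proj I q (\<lambda>x. \<Sum>k\<in>K. c k * f k x) x = (\<Sum>k\<in>K. c k * perp_proj I q (f k) x)"
proof -
  define n where "n = (\<Sum>y\<in>I. q y * q y)"
  show ?thesis
    unfolding perp_proj_def n_def[symmetric]
    by (simp add: sum_distrib_right sum_distrib_left sum_divide_distrib sum_subtractf
        right_diff_distrib sum.swap[of _ I K] mult.assoc mult.left_commute[of "c _"])
qed

lemma perp_proj_self: "finite I \<Longrightarrow> x \<in> I \<Longrightarrow> perp_proj I q q x = 0"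
  using sum_nonneg_eq_0_iff[of I "\<lambda>y. q y * q y"] by (auto simp: perp_proj_def)

text \<open>Induction on \<open>J\<close>: projecting orthogonally to \<open>p j\<close> removes one spanning function
  without increasing distances.\<close>

lemma l2_limit_of_combinations_is_combination:
  fixes w :: "'i \<Rightarrow> real" and p :: "'j \<Rightarrow> 'i \<Rightarrow> real"
  assumes "finite I" "finite J"
    and "\<forall>\<epsilon>>0. \<exists>c. (\<Sum>x\<in>I. (w x - (\<Sum>j\<in>J. c j * p j x))\<^sup>2) < \<epsilon>"
  shows "\<exists>c. \<forall>x\<in>I. w x = (\<Sum>j\<in>J. c j * p j x)"
  using assms(2,3)
proof (induction J arbitrary: p w rule: finite_induct)
  case empty
  have "(\<Sum>x\<in>I. (w x)\<^sup>2) \<le> 0"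
  proof (rule ccontr)
    assume "\<not> (\<Sum>x\<in>I. (w x)\<^sup>2) \<le> 0"
    then obtain c where "(\<Sum>x\<in>I. (w x - (\<Sum>j\<in>{}. c j * p j x))\<^sup>2) < (\<Sum>x\<in>I. (w x)\<^sup>2)"
      using empty.prems by (meson not_le)
    then show False by simp
  qed
  then have "(\<Sum>x\<in>I. (w x)\<^sup>2) = 0"
    by (simp add: antisym sum_nonneg)
  then have "\<forall>x\<in>I. w x = 0"
    using sum_nonneg_eq_0_iff[OF \<open>finite I\<close>, of "\<lambda>x. (w x)\<^sup>2"] by simp
  then show ?case by simp
next
  case (insert j J)
  define P where "P = perp_proj I (p j)"
  have P_insert: "P (\<lambda>x. \<Sum>k\<in>insert j J. c k * p k x) x = (\<Sum>k\<in>J. c k * P (p k) x)"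
    if "x \<in> I" for c x
  proof -
    have "P (\<lambda>x. \<Sum>k\<in>insert j J. c k * p k x) x = (\<Sum>k\<in>insert j J. c k * P (p k) x)"
      unfolding P_def by (rule perp_proj_sum)
    then show ?thesis
      using insert.hyps perp_proj_self[OF \<open>finite I\<close> that] by (simp add: P_def)
  qed
  have "\<forall>\<epsilon>>0. \<exists>c. (\<Sum>x\<in>I. (P w x - (\<Sum>k\<in>J. c k * P (p k) x))\<^sup>2) < \<epsilon>"
  proof (intro allI impI)
    fix \<epsilon> :: real assume "\<epsilon> > 0"
    then obtain c where c: "(\<Sum>x\<in>I. (w x - (\<Sum>k\<in>insert j J. c k * p k x))\<^sup>2) < \<epsilon>"
      using insert.prems by blast
    have "(\<Sum>x\<in>I. (P w x - (\<Sum>k\<in>J. c k * P (p k) x))\<^sup>2)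
        = (\<Sum>x\<in>I. (P (\<lambda>x. w x - (\<Sum>k\<in>insert j J. c k * p k x)) x)\<^sup>2)"
      by (intro sum.cong) (simp_all add: P_def perp_proj_diff P_insert[unfolded P_def])
    also have "\<dots> \<le> (\<Sum>x\<in>I. (w x - (\<Sum>k\<in>insert j J. c k * p k x))\<^sup>2)"
      unfolding P_def by (rule sum_sq_perp_proj_le)
    finally show "\<exists>c. (\<Sum>x\<in>I. (P w x - (\<Sum>k\<in>J. c k * P (p k) x))\<^sup>2) < \<epsilon>"
      using c by (intro exI[of _ c]) simp
  qed
  then have "\<exists>c. \<forall>x\<in>I. P w x = (\<Sum>k\<in>J. c k * P (p k) x)"
    by (rule insert.IH)
  then obtain c where c: "\<forall>x\<in>I. P w x = (\<Sum>k\<in>J. c k * P (p k) x)" ..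
  define \<beta> where "\<beta> = (\<Sum>y\<in>I. (w y - (\<Sum>k\<in>J. c k * p k y)) * p j y) / (\<Sum>y\<in>I. p j y * p j y)"
  have "w x = (\<Sum>k\<in>insert j J. (c(j := \<beta>)) k * p k x)" if "x \<in> I" for x
  proof -
    have "P (\<lambda>x. w x - (\<Sum>k\<in>J. c k * p k x)) x = 0"
      using c that by (simp add: P_def perp_proj_diff perp_proj_sum)
    then have "w x = (\<Sum>k\<in>J. c k * p k x) + \<beta> * p j x"
      by (simp add: P_def perp_proj_def \<beta>_def)
    moreover have "(\<Sum>k\<in>J. (c(j := \<beta>)) k * p k x) = (\<Sum>k\<in>J. c k * p k x)"
      using insert.hyps by (intro sum.cong) auto
    ultimately show ?thesis
      using insert.hyps by simp
  qed
  then show ?case by blast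
qed

lemma linear_eq_sum_coordinates:
  fixes \<Phi> :: "('j \<Rightarrow> real) \<Rightarrow> 'i \<Rightarrow> real"
  assumes add: "\<And>c c' x. \<Phi> (\<lambda>j. c j + c' j) x = \<Phi> c x + \<Phi> c' x"
    and scale: "\<And>r c x. \<Phi> (\<lambda>j. r * c j) x = r * \<Phi> c x"
    and supp: "\<And>c c' x. \<forall>j\<in>J. c j = c' j \<Longrightarrow> \<Phi> c x = \<Phi> c' x"
    and "finite J"
  shows "\<Phi> c x = (\<Sum>j\<in>J. c j * \<Phi> (\<lambda>k. if k = j then 1 else 0) x)"
proof -
  have zero: "\<Phi> (\<lambda>_. 0) x = 0" for x
    using scale[of 0 "\<lambda>_. 0"] by simp
  have "\<Phi> (\<lambda>k. \<Sum>j\<in>F. c j * (if k = j then 1 else 0)) x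
      = (\<Sum>j\<in>F. c j * \<Phi> (\<lambda>k. if k = j then 1 else 0) x)" if "finite F" for F
    using that
  proof (induction F rule: finite_induct)
    case empty
    then show ?case using zero by simp
  next
    case (insert j F)
    then show ?case
      using add[of "\<lambda>k. c j * (if k = j then 1 else 0)"] scale[of "c j"] by simp
  qed
  moreover have "\<Phi> c x = \<Phi> (\<lambda>k. \<Sum>j\<in>J. c j * (if k = j then 1 else 0)) x"
  proof (rule supp, intro ballI)
    fix k assume "k \<in> J"
    have "(\<Sum>j\<in>J. c j * (if k = j then 1 else 0)) = (\<Sum>j\<in>J. if k = j then c j else 0)"
      by (rule sum.cong) auto
    then show "c k = (\<Sum>j\<in>J. c j * (if k = j then 1 else 0))"
      using \<open>k \<in> J\<close> \<open>finite J\<close> by simp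
  qed
  ultimately show ?thesis using \<open>finite J\<close> by simp
qed

section \<open>Infinitesimal isometries\<close>

text \<open>\<open>w x\<close> is the displacement of the point \<open>\<phi> x \<cdot> x0\<close>, read in the frame \<open>rot (\<phi> x)\<close>:
  \<open>U_iso R\<close> is the case \<open>\<phi> = id\<close>, and \<open>\<phi> = euc_mult g\<close> views the translate \<open>g R\<close> globally.\<close>

definition inf_isometry :: "nat \<Rightarrow> real vec \<Rightarrow> euc set \<Rightarrow> (euc \<Rightarrow> euc) \<Rightarrow> (euc \<Rightarrow> real vec) \<Rightarrow> bool"
  where "inf_isometry d x0 X \<phi> w \<longleftrightarrow> (\<exists>a\<in>carrier_vec d. \<exists>S\<in>skew d.
     \<forall>x\<in>X. rot (\<phi> x) *\<^sub>v w x = a + S *\<^sub>v (euc_act (\<phi> x) x0 - x0))"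

lemma U_iso_iff_inf_isometry:
  "v \<in> U_iso d x0 R \<longleftrightarrow> (\<forall>g\<in>R. v g \<in> carrier_vec d) \<and> inf_isometry d x0 R (\<lambda>g. g) v"
  by (simp add: U_iso_def inf_isometry_def)

lemma conj_skew:
  assumes Q: "Q \<in> carrier_mat d d" and S: "S \<in> skew d"
  shows "Q * S * transpose_mat Q \<in> skew d"
proof -
  have Sc: "S \<in> carrier_mat d d" and ST: "transpose_mat S = - S" using S by (auto simp: skew_def)
  have "transpose_mat (Q * S * transpose_mat Q) = Q * (transpose_mat S * transpose_mat Q)"
    using Q Sc by (simp add: transpose_mult[of _ d d _ d])
  also have "\<dots> = - (Q * S * transpose_mat Q)"
    using Q Sc ST by (simp add: assoc_mult_mat[of _ d d _ d _ d])
  finally show ?thesis unfolding skew_def using Q Sc by auto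
qed

lemma inf_isometry_left_mult:
  assumes k: "k \<in> euc_group d" and \<phi>: "\<phi> ` X \<subseteq> euc_group d" and x0: "x0 \<in> carrier_vec d"
    and w: "\<forall>x\<in>X. w x \<in> carrier_vec d" and iso: "inf_isometry d x0 X \<phi> w"
  shows "inf_isometry d x0 X (\<lambda>x. euc_mult k (\<phi> x)) w"
proof -
  obtain a S where a: "a \<in> carrier_vec d" and S: "S \<in> skew d"
    and eq: "\<forall>x\<in>X. rot (\<phi> x) *\<^sub>v w x = a + S *\<^sub>v (euc_act (\<phi> x) x0 - x0)"
    using iso unfolding inf_isometry_def by blast
  define Q where "Q = rot k"
  have Q: "Q \<in> carrier_mat d d" using rot_carrier[OF k] by (simp add: Q_def)
  have Sc: "S \<in> carrier_mat d d" using S by (auto simp: skew_def)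
  define S' where "S' = Q * S * transpose_mat Q"
  have S'c: "S' \<in> carrier_mat d d" using Q Sc by (simp add: S'_def)
  define z where "z = euc_act k x0 - x0"
  have zc: "z \<in> carrier_vec d" using euc_act_carrier[OF k x0] x0 by (simp add: z_def)
  show ?thesis unfolding inf_isometry_def
  proof (intro bexI[of _ "Q *\<^sub>v a - S' *\<^sub>v z"] bexI[of _ S'] ballI)
    show "Q *\<^sub>v a - S' *\<^sub>v z \<in> carrier_vec d" using Q a S'c zc by simp
    show "S' \<in> skew d" unfolding S'_def by (rule conj_skew[OF Q S])
    fix x assume x: "x \<in> X"
    have g: "\<phi> x \<in> euc_group d" using \<phi> x by auto
    define y where "y = euc_act (\<phi> x) x0 - x0"
    have yc: "y \<in> carrier_vec d" using euc_act_carrier[OF g x0] x0 by (simp add: y_def)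
    have "rot (euc_mult k (\<phi> x)) *\<^sub>v w x = Q *\<^sub>v (a + S *\<^sub>v y)"
      using rot_carrier[OF k] rot_carrier[OF g] w x eq
      by (simp add: rot_mult Q_def y_def assoc_mult_mat_vec[of _ d d _ d])
    also have "\<dots> = Q *\<^sub>v a + Q *\<^sub>v (S *\<^sub>v y)"
      using Q a Sc yc by (simp add: mult_add_distrib_mat_vec)
    also have "Q *\<^sub>v (S *\<^sub>v y) = S' *\<^sub>v (Q *\<^sub>v y)"
      using Q Sc yc euc_groupD(3)[OF k]
      by (simp add: S'_def Q_def rot_def assoc_mult_mat[of _ d d _ d _ d]
          assoc_mult_mat_vec[symmetric, of _ d d _ d] del: assoc_mult_mat_vec)
    also have "Q *\<^sub>v a + S' *\<^sub>v (Q *\<^sub>v y) = (Q *\<^sub>v a - S' *\<^sub>v z) + S' *\<^sub>v (Q *\<^sub>v y + z)"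
      using Q a S'c yc zc by (simp add: mult_add_distrib_mat_vec[of _ d d]) (intro eq_vecI, auto)
    also have "Q *\<^sub>v y + z = euc_act (euc_mult k (\<phi> x)) x0 - x0"
      using euc_act_mult_diff[OF k g x0] by (simp add: Q_def y_def z_def)
    finally show "rot (euc_mult k (\<phi> x)) *\<^sub>v w x
        = Q *\<^sub>v a - S' *\<^sub>v z + S' *\<^sub>v (euc_act (euc_mult k (\<phi> x)) x0 - x0)" .
  qed
qed

lemma translate_in_U_iso_iff:
  assumes g: "g \<in> euc_group d" and R: "R \<subseteq> euc_group d" and x0: "x0 \<in> carrier_vec d"
    and u: "\<forall>h\<in>R. u (euc_mult g h) \<in> carrier_vec d"
  shows "(\<lambda>h. u (euc_mult g h)) \<in> U_iso d x0 R
    \<longleftrightarrow> inf_isometry d x0 R (euc_mult g) (\<lambda>h. u (euc_mult g h))"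
proof
  assume "(\<lambda>h. u (euc_mult g h)) \<in> U_iso d x0 R"
  then show "inf_isometry d x0 R (euc_mult g) (\<lambda>h. u (euc_mult g h))"
    using inf_isometry_left_mult[OF g _ x0 u, of "\<lambda>h. h"] R
    by (simp add: U_iso_iff_inf_isometry)
next
  assume "inf_isometry d x0 R (euc_mult g) (\<lambda>h. u (euc_mult g h))"
  then have "inf_isometry d x0 R (\<lambda>h. euc_mult (euc_inv g) (euc_mult g h)) (\<lambda>h. u (euc_mult g h))"
    using inf_isometry_left_mult[OF euc_inv_closed[OF g] _ x0 u] R g
    by (auto intro: euc_mult_closed)
  moreover have "euc_mult (euc_inv g) (euc_mult g h) = h" if "h \<in> R" for h
    using that R g
    by (simp add: euc_mult_assoc[symmetric, OF euc_inv_closed[OF g] g] euc_inv_left euc_id_mult subsetD)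
  ultimately show "(\<lambda>h. u (euc_mult g h)) \<in> U_iso d x0 R"
    using u by (simp add: U_iso_iff_inf_isometry inf_isometry_def)
qed

text \<open>Coordinates of \<open>U_iso\<close>: \<open>Inl k\<close> carries \<open>a $ k\<close> and \<open>Inr (k, l)\<close> carries \<open>M $$ (k, l)\<close>,
  where \<open>S = M - M\<^sup>T\<close>; this parametrisation is linear and reaches every skew \<open>S\<close>.\<close>

definition iso_coeff_vec :: "nat \<Rightarrow> (nat + nat \<times> nat \<Rightarrow> real) \<Rightarrow> real vec" where
  "iso_coeff_vec d c = vec d (\<lambda>k. c (Inl k))"

definition iso_coeff_skew :: "nat \<Rightarrow> (nat + nat \<times> nat \<Rightarrow> real) \<Rightarrow> real mat" where
  "iso_coeff_skew d c = mat d d (\<lambda>(k, l). c (Inr (k, l)) - c (Inr (l, k)))"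

definition iso_field :: "nat \<Rightarrow> real vec \<Rightarrow> (nat + nat \<times> nat \<Rightarrow> real) \<Rightarrow> euc \<times> nat \<Rightarrow> real" where
  "iso_field d x0 c hi = (\<Sum>k<d. rot (fst hi) $$ (k, snd hi) * (c (Inl k)
      + (\<Sum>l<d. (c (Inr (k, l)) - c (Inr (l, k))) * (euc_act (fst hi) x0 - x0) $ l)))"

lemma iso_coeff_carrier: "iso_coeff_vec d c \<in> carrier_vec d" "iso_coeff_skew d c \<in> carrier_mat d d"
  by (simp_all add: iso_coeff_vec_def iso_coeff_skew_def)

lemma iso_coeff_skew_skew: "iso_coeff_skew d c \<in> skew d"
  unfolding skew_def iso_coeff_skew_def by (auto intro!: eq_matI)

lemma iso_field_eq:
  assumes "h \<in> euc_group d" "x0 \<in> carrier_vec d" "i < d"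
  shows "iso_field d x0 c (h, i) = (transpose_mat (rot h) *\<^sub>v
      (iso_coeff_vec d c + iso_coeff_skew d c *\<^sub>v (euc_act h x0 - x0))) $ i"
proof -
  have Q: "rot h \<in> carrier_mat d d" using rot_carrier[OF assms(1)] .
  have y: "euc_act h x0 - x0 \<in> carrier_vec d"
    using euc_act_carrier[OF assms(1,2)] assms(2) by simp
  have v: "iso_coeff_vec d c + iso_coeff_skew d c *\<^sub>v (euc_act h x0 - x0) \<in> carrier_vec d"
    using y iso_coeff_carrier[of d c] by (metis add_carrier_vec mult_mat_vec_carrier)
  have "(transpose_mat (rot h) *\<^sub>v (iso_coeff_vec d c + iso_coeff_skew d c *\<^sub>v (euc_act h x0 - x0))) $ i
      = (\<Sum>k<d. transpose_mat (rot h) $$ (i, k)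
          * (iso_coeff_vec d c + iso_coeff_skew d c *\<^sub>v (euc_act h x0 - x0)) $ k)"
    using Q v assms(3) by (intro index_mult_mat_vec_sum) auto
  also have "\<dots> = iso_field d x0 c (h, i)"
    unfolding iso_field_def using Q y assms(2,3)
    by (intro sum.cong refl) (auto simp: iso_coeff_vec_def iso_coeff_skew_def
        index_mult_mat_vec_sum[of _ d d] scalar_prod_def lessThan_atLeast0 intro!: sum.cong)
  finally show ?thesis by simp
qed

lemma iso_field_add: "iso_field d x0 (\<lambda>j. c j + c' j) hi = iso_field d x0 c hi + iso_field d x0 c' hi"
proof -
  define y where "y = euc_act (fst hi) x0 - x0"
  have inner: "(\<Sum>l<d. ((c (Inr (k, l)) + c' (Inr (k, l))) - (c (Inr (l, k)) + c' (Inr (l, k)))) * y $ l)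
      = (\<Sum>l<d. (c (Inr (k, l)) - c (Inr (l, k))) * y $ l)
        + (\<Sum>l<d. (c' (Inr (k, l)) - c' (Inr (l, k))) * y $ l)" for k
    by (simp add: sum.distrib[symmetric] algebra_simps)
  have "iso_field d x0 (\<lambda>j. c j + c' j) hi
      = (\<Sum>k<d. rot (fst hi) $$ (k, snd hi) * (c (Inl k) + (\<Sum>l<d. (c (Inr (k, l)) - c (Inr (l, k))) * y $ l))
        + rot (fst hi) $$ (k, snd hi) * (c' (Inl k) + (\<Sum>l<d. (c' (Inr (k, l)) - c' (Inr (l, k))) * y $ l)))"
    unfolding iso_field_def y_def[symmetric]
    by (intro sum.cong refl, simp only: inner, simp add: ring_distribs)
  then show ?thesis
    unfolding iso_field_def y_def[symmetric] by (simp add: sum.distrib)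
qed

lemma iso_field_scale: "iso_field d x0 (\<lambda>j. r * c j) hi = r * iso_field d x0 c hi"
proof -
  define y where "y = euc_act (fst hi) x0 - x0"
  have inner: "(\<Sum>l<d. (r * c (Inr (k, l)) - r * c (Inr (l, k))) * y $ l)
      = r * (\<Sum>l<d. (c (Inr (k, l)) - c (Inr (l, k))) * y $ l)" for k
    by (simp add: sum_distrib_left algebra_simps)
  have "iso_field d x0 (\<lambda>j. r * c j) hi
      = (\<Sum>k<d. r * (rot (fst hi) $$ (k, snd hi)
          * (c (Inl k) + (\<Sum>l<d. (c (Inr (k, l)) - c (Inr (l, k))) * y $ l))))"
    unfolding iso_field_def y_def[symmetric]
    by (intro sum.cong refl, simp only: inner, simp add: ring_distribs)
  then show ?thesis
    unfolding iso_field_def y_def[symmetric] by (simp add: sum_distrib_left)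
qed

lemma iso_field_cong:
  "\<forall>j\<in>Inl ` {..<d} \<union> Inr ` ({..<d} \<times> {..<d}). c j = c' j \<Longrightarrow> iso_field d x0 c hi = iso_field d x0 c' hi"
  unfolding iso_field_def by (intro sum.cong refl) auto

lemma U_iso_imp_iso_field:
  assumes "v \<in> U_iso d x0 R" "R \<subseteq> euc_group d" "x0 \<in> carrier_vec d"
  shows "\<exists>c. \<forall>h\<in>R. \<forall>i<d. v h $ i = iso_field d x0 c (h, i)"
proof -
  obtain a S where a: "a \<in> carrier_vec d" and S: "S \<in> skew d"
    and eq: "\<forall>g\<in>R. rot g *\<^sub>v v g = a + S *\<^sub>v (euc_act g x0 - x0)"
    and v: "\<forall>g\<in>R. v g \<in> carrier_vec d"
    using assms(1) unfolding U_iso_def by blast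
  define c where "c j = (case j of Inl k \<Rightarrow> a $ k | Inr (k, l) \<Rightarrow> S $$ (k, l) / 2)" for j
  have Sc: "S \<in> carrier_mat d d" and ST: "transpose_mat S = - S"
    using S by (auto simp: skew_def)
  have "iso_coeff_vec d c = a"
    using a by (auto simp: iso_coeff_vec_def c_def)
  moreover have "iso_coeff_skew d c = S"
  proof (rule eq_matI)
    fix k l assume "k < dim_row S" "l < dim_col S"
    moreover have "transpose_mat S $$ (l, k) = (- S) $$ (l, k)" using ST by simp
    ultimately show "iso_coeff_skew d c $$ (k, l) = S $$ (k, l)"
      using Sc by (auto simp: iso_coeff_skew_def c_def)
  qed (use Sc in \<open>auto simp: iso_coeff_skew_def\<close>)
  ultimately have "v h $ i = iso_field d x0 c (h, i)" if "h \<in> R" "i < d" for h i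
    using that assms(2,3) eq v orth_transpose_mult_cancel[of h d "v h"] iso_field_eq[of h d x0 i c]
    by auto
  then show ?thesis by blast
qed

lemma iso_field_in_U_iso:
  assumes R: "R \<subseteq> euc_group d" and x0: "x0 \<in> carrier_vec d" and w: "\<forall>h\<in>R. w h \<in> carrier_vec d"
    and field: "\<forall>h\<in>R. \<forall>i<d. w h $ i = iso_field d x0 c (h, i)"
  shows "w \<in> U_iso d x0 R"
  unfolding U_iso_def
proof (intro CollectI conjI bexI[of _ "iso_coeff_vec d c"] bexI[of _ "iso_coeff_skew d c"] ballI)
  fix h assume h: "h \<in> R"
  then have g: "h \<in> euc_group d" using R by auto
  define v where "v = iso_coeff_vec d c + iso_coeff_skew d c *\<^sub>v (euc_act h x0 - x0)"
  have v: "v \<in> carrier_vec d"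
    using euc_act_carrier[OF g x0] x0 iso_coeff_carrier[of d c] unfolding v_def
    by (metis add_carrier_vec minus_carrier_vec mult_mat_vec_carrier)
  have "w h = transpose_mat (rot h) *\<^sub>v v"
    using w h field rot_carrier[OF g] iso_field_eq[OF g x0, of _ c]
    by (intro eq_vecI) (auto simp: v_def)
  then show "rot h *\<^sub>v w h = iso_coeff_vec d c + iso_coeff_skew d c *\<^sub>v (euc_act h x0 - x0)"
    using orth_mult_transpose_cancel[OF g v] by (simp add: v_def)
qed (use w iso_coeff_skew_skew in \<open>auto simp: iso_coeff_vec_def\<close>)

lemma zero_in_U_iso:
  assumes "R \<subseteq> euc_group d" "x0 \<in> carrier_vec d"
  shows "(\<lambda>_. 0\<^sub>v d) \<in> U_iso d x0 R"
  using assms by (intro iso_field_in_U_iso[where c = "\<lambda>_. 0"]) (auto simp: iso_field_def)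

lemma U_iso_closed:
  assumes R: "finite R" "R \<subseteq> euc_group d" and x0: "x0 \<in> carrier_vec d"
    and w: "\<forall>h\<in>R. w h \<in> carrier_vec d"
    and approx: "\<And>\<epsilon>. \<epsilon> > 0 \<Longrightarrow> \<exists>v\<in>U_iso d x0 R. (\<Sum>h\<in>R. \<Sum>i<d. (w h $ i - v h $ i)\<^sup>2) < \<epsilon>"
  shows "w \<in> U_iso d x0 R"
proof -
  define I where "I = R \<times> {..<d}"
  define J :: "(nat + nat \<times> nat) set" where "J = Inl ` {..<d} \<union> Inr ` ({..<d} \<times> {..<d})"
  define e where "e j = (\<lambda>k. if k = j then 1 else 0 :: real)" for j :: "nat + nat \<times> nat"
  have field: "iso_field d x0 c x = (\<Sum>j\<in>J. c j * iso_field d x0 (e j) x)" for c x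
    unfolding e_def J_def
    by (rule linear_eq_sum_coordinates) (auto simp: iso_field_add iso_field_scale intro: iso_field_cong)
  have "\<exists>c. (\<Sum>x\<in>I. ((\<lambda>(h, i). w h $ i) x - (\<Sum>j\<in>J. c j * iso_field d x0 (e j) x))\<^sup>2) < \<epsilon>"
    if \<epsilon>: "\<epsilon> > 0" for \<epsilon>
  proof -
    obtain v where v: "v \<in> U_iso d x0 R" and lt: "(\<Sum>h\<in>R. \<Sum>i<d. (w h $ i - v h $ i)\<^sup>2) < \<epsilon>"
      using approx[OF \<epsilon>] by blast
    obtain c where c: "\<forall>h\<in>R. \<forall>i<d. v h $ i = iso_field d x0 c (h, i)"
      using U_iso_imp_iso_field[OF v R(2) x0] by blast
    have "(\<Sum>x\<in>I. ((\<lambda>(h, i). w h $ i) x - (\<Sum>j\<in>J. c j * iso_field d x0 (e j) x))\<^sup>2)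
        = (\<Sum>(h, i)\<in>R \<times> {..<d}. (w h $ i - iso_field d x0 c (h, i))\<^sup>2)"
      by (simp add: I_def field[symmetric] split_beta)
    also have "\<dots> = (\<Sum>h\<in>R. \<Sum>i<d. (w h $ i - v h $ i)\<^sup>2)"
      using c by (simp add: sum.cartesian_product[symmetric])
    finally show ?thesis using lt by (intro exI[of _ c]) simp
  qed
  then have "\<exists>c. \<forall>x\<in>I. (\<lambda>(h, i). w h $ i) x = (\<Sum>j\<in>J. c j * iso_field d x0 (e j) x)"
    using R(1) by (intro l2_limit_of_combinations_is_combination) (auto simp: I_def J_def)
  then obtain c where "\<forall>x\<in>I. (\<lambda>(h, i). w h $ i) x = (\<Sum>j\<in>J. c j * iso_field d x0 (e j) x)" ..
  then show "w \<in> U_iso d x0 R"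
    by (intro iso_field_in_U_iso[OF R(2) x0 w, of c]) (auto simp: I_def field[symmetric])
qed

lemma dist_Uiso_eq_0_iff:
  assumes R: "finite R" "R \<subseteq> euc_group d" and x0: "x0 \<in> carrier_vec d"
    and w: "\<forall>h\<in>R. w h \<in> carrier_vec d"
  shows "dist_Uiso d x0 R w = 0 \<longleftrightarrow> w \<in> U_iso d x0 R"
proof -
  define Z where "Z = {sqrt (\<Sum>h\<in>R. \<Sum>i<d. (w h $ i - v h $ i)\<^sup>2) | v. v \<in> U_iso d x0 R}"
  have Z_nonneg: "z \<ge> 0" if "z \<in> Z" for z
    using that unfolding Z_def by (auto intro!: sum_nonneg)
  have Z_ne: "Z \<noteq> {}"
    using zero_in_U_iso[OF R(2) x0] unfolding Z_def by blast
  have dist: "dist_Uiso d x0 R w = Inf Z"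
    unfolding dist_Uiso_def Z_def by simp
  show ?thesis
  proof
    assume "w \<in> U_iso d x0 R"
    then have "0 \<in> Z" unfolding Z_def by force
    then have "Inf Z = 0"
      using Z_nonneg by (intro cInf_eq_minimum) auto
    then show "dist_Uiso d x0 R w = 0"
      using dist by simp
  next
    assume dist0: "dist_Uiso d x0 R w = 0"
    show "w \<in> U_iso d x0 R"
    proof (rule U_iso_closed[OF R x0 w])
      fix \<epsilon> :: real assume "\<epsilon> > 0"
      then have "Inf Z < sqrt \<epsilon>" using dist0 dist by simp
      then obtain v where "v \<in> U_iso d x0 R"
        and "sqrt (\<Sum>h\<in>R. \<Sum>i<d. (w h $ i - v h $ i)\<^sup>2) < sqrt \<epsilon>"
        using cInf_lessD[OF Z_ne] unfolding Z_def by blast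
      then show "\<exists>v\<in>U_iso d x0 R. (\<Sum>h\<in>R. \<Sum>i<d. (w h $ i - v h $ i)\<^sup>2) < \<epsilon>"
        by auto
    qed
  qed
qed

section \<open>Gluing along generators\<close>

lemma affine_map_aff_comb:
  fixes M :: "real mat"
  assumes M: "M \<in> carrier_mat d d" and b: "b \<in> carrier_vec d" and c: "sum c F = 1"
    and \<phi>: "\<forall>x\<in>F. \<phi> x \<in> carrier_vec d" and y: "y \<in> carrier_vec d"
    and comb: "\<forall>i<d. y $ i = (\<Sum>x\<in>F. c x * \<phi> x $ i)" and i: "i < d"
  shows "(M *\<^sub>v y + b) $ i = (\<Sum>x\<in>F. c x * (M *\<^sub>v \<phi> x + b) $ i)"
proof -
  have "(M *\<^sub>v y) $ i = (\<Sum>k<d. M $$ (i, k) * y $ k)"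
    by (rule index_mult_mat_vec_sum[OF M y i])
  then have "(M *\<^sub>v y + b) $ i = (\<Sum>k<d. M $$ (i, k) * (\<Sum>x\<in>F. c x * \<phi> x $ k)) + (\<Sum>x\<in>F. c x) * b $ i"
    using M y b i comb c by simp
  also have "\<dots> = (\<Sum>x\<in>F. c x * ((\<Sum>k<d. M $$ (i, k) * \<phi> x $ k) + b $ i))"
    by (simp add: sum_distrib_left sum_distrib_right distrib_left sum.distrib algebra_simps
        sum.swap[of _ "{..<d}" F])
  also have "\<dots> = (\<Sum>x\<in>F. c x * (M *\<^sub>v \<phi> x + b) $ i)"
    using index_mult_mat_vec_sum[OF M _ i] \<phi> b i by (intro sum.cong refl) simp
  finally show ?thesis .
qed

lemma affine_maps_agree_on_aff_comb:
  fixes M1 M2 :: "real mat"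
  assumes M1: "M1 \<in> carrier_mat d d" and b1: "b1 \<in> carrier_vec d"
    and M2: "M2 \<in> carrier_mat d d" and b2: "b2 \<in> carrier_vec d"
    and c: "sum c F = 1" and \<phi>: "\<forall>x\<in>F. \<phi> x \<in> carrier_vec d" and y: "y \<in> carrier_vec d"
    and comb: "\<forall>i<d. y $ i = (\<Sum>x\<in>F. c x * \<phi> x $ i)"
    and agree: "\<forall>x\<in>F. M1 *\<^sub>v \<phi> x + b1 = M2 *\<^sub>v \<phi> x + b2"
  shows "M1 *\<^sub>v y + b1 = M2 *\<^sub>v y + b2"
proof (rule eq_vecI)
  fix i assume "i < dim_vec (M2 *\<^sub>v y + b2)"
  then have i: "i < d" using b2 by simp
  show "(M1 *\<^sub>v y + b1) $ i = (M2 *\<^sub>v y + b2) $ i"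
    using affine_map_aff_comb[OF M1 b1 c \<phi> y comb i] affine_map_aff_comb[OF M2 b2 c \<phi> y comb i] agree
    by simp
qed (use M1 M2 b1 b2 in auto)

lemma affine_form_eq:
  fixes S :: "real mat"
  assumes "a \<in> carrier_vec d" "S \<in> carrier_mat d d" "y \<in> carrier_vec d" "x0 \<in> carrier_vec d"
  shows "a + S *\<^sub>v (y - x0) = S *\<^sub>v y + (a - S *\<^sub>v x0)"
  using assms by (auto simp: mult_minus_distrib_mat_vec[of _ d d] intro!: eq_vecI)

lemma affine_maps_agree_on_orbit:
  fixes S1 S2 :: "real mat"
  assumes G: "euc_subgroup d G" and x0: "x0 \<in> carrier_vec d" and R'': "property1 d G x0 R''"
    and a: "a1 \<in> carrier_vec d" "a2 \<in> carrier_vec d" and S: "S1 \<in> carrier_mat d d" "S2 \<in> carrier_mat d d"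
    and q: "q \<in> G"
    and agree: "\<And>h. h \<in> R'' \<Longrightarrow> a1 + S1 *\<^sub>v (euc_act (euc_mult q h) x0 - x0)
      = a2 + S2 *\<^sub>v (euc_act (euc_mult q h) x0 - x0)"
    and k: "k \<in> G"
  shows "a1 + S1 *\<^sub>v (euc_act k x0 - x0) = a2 + S2 *\<^sub>v (euc_act k x0 - x0)"
proof -
  note GD = euc_subgroupD[OF G]
  have E: "g \<in> euc_group d" if "g \<in> G" for g using GD(1) that by blast
  have act: "euc_act g x0 \<in> carrier_vec d" if "g \<in> G" for g
    using euc_act_carrier[OF E[OF that] x0] .
  have R''G: "R'' \<subseteq> G"
    and hull: "aff_hull d ((\<lambda>g. euc_act g x0) ` R'') = aff_hull d ((\<lambda>g. euc_act g x0) ` G)"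
    using R'' unfolding property1_def by auto
  \<comment> \<open>\<open>k x0 = q (m x0)\<close>, and \<open>m x0\<close> is an affine combination of \<open>R'' x0\<close> by Property 1.\<close>
  define m where "m = euc_mult (euc_inv q) k"
  have m: "m \<in> G" unfolding m_def using GD(3)[OF GD(4)[OF q] k] .
  have "euc_mult q m = k"
    unfolding m_def euc_mult_assoc[OF E[OF q] E[OF GD(4)[OF q]] E[OF k], symmetric]
    by (simp add: euc_inv_right[OF E[OF q]] euc_id_mult[OF E[OF k]])
  then have kq: "euc_act k x0 = euc_act q (euc_act m x0)"
    using euc_act_mult[OF E[OF q] E[OF m] x0] by simp
  have "\<exists>F c. finite F \<and> F \<subseteq> (\<lambda>g. euc_act g x0) ` G \<and> sum c F = 1
      \<and> (\<forall>i<d. euc_act m x0 $ i = (\<Sum>x\<in>F. c x * x $ i))"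
    by (rule exI[of _ "{euc_act m x0}"], rule exI[of _ "\<lambda>_. 1"]) (use m in auto)
  then have "euc_act m x0 \<in> aff_hull d ((\<lambda>g. euc_act g x0) ` G)"
    unfolding aff_hull_def using act[OF m] by simp
  then have "euc_act m x0 \<in> aff_hull d ((\<lambda>g. euc_act g x0) ` R'')"
    by (simp add: hull)
  then obtain F c where F: "F \<subseteq> (\<lambda>h. euc_act h x0) ` R''" and c: "sum c F = 1"
    and comb: "\<forall>i<d. euc_act m x0 $ i = (\<Sum>x\<in>F. c x * x $ i)"
    unfolding aff_hull_def by (elim CollectE conjE exE) simp
  have F_carrier: "\<forall>x\<in>F. x \<in> carrier_vec d" using F R''G act by blast
  have comb_k: "\<forall>i<d. euc_act k x0 $ i = (\<Sum>x\<in>F. c x * euc_act q x $ i)"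
    unfolding kq euc_act_def[of q]
    using affine_map_aff_comb[OF euc_groupD(1,2)[OF E[OF q]] c F_carrier act[OF m] comb] by blast
  have "\<forall>x\<in>F. S1 *\<^sub>v euc_act q x + (a1 - S1 *\<^sub>v x0) = S2 *\<^sub>v euc_act q x + (a2 - S2 *\<^sub>v x0)"
  proof
    fix x assume "x \<in> F"
    then obtain h where h: "h \<in> R''" and x: "x = euc_act h x0" using F by blast
    have hG: "h \<in> G" using h R''G by blast
    have "euc_act q x = euc_act (euc_mult q h) x0"
      using euc_act_mult[OF E[OF q] E[OF hG] x0] x by simp
    then show "S1 *\<^sub>v euc_act q x + (a1 - S1 *\<^sub>v x0) = S2 *\<^sub>v euc_act q x + (a2 - S2 *\<^sub>v x0)"
      using agree[OF h] affine_form_eq[OF a(1) S(1) act[OF GD(3)[OF q hG]] x0]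
        affine_form_eq[OF a(2) S(2) act[OF GD(3)[OF q hG]] x0] by simp
  qed
  then have "S1 *\<^sub>v euc_act k x0 + (a1 - S1 *\<^sub>v x0) = S2 *\<^sub>v euc_act k x0 + (a2 - S2 *\<^sub>v x0)"
    using a S x0 F_carrier euc_act_carrier[OF E[OF q]]
    by (intro affine_maps_agree_on_aff_comb[OF S(1) _ S(2) _ c _ act[OF k] comb_k]) auto
  then show ?thesis
    using affine_form_eq[OF a(1) S(1) act[OF k] x0] affine_form_eq[OF a(2) S(2) act[OF k] x0] by simp
qed

lemma invariant_under_generators:
  assumes G: "euc_subgroup d G" and R': "euc_gen d R' = G"
    and inv: "\<And>g r. g \<in> G \<Longrightarrow> r \<in> R' \<Longrightarrow> F (euc_mult g r) = F g"
    and g: "g \<in> G"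
  shows "F g = F (euc_id d)"
proof -
  note GD = euc_subgroupD[OF G]
  have E: "x \<in> euc_group d" if "x \<in> G" for x using GD(1) that by blast
  have "\<forall>g\<in>G. F (euc_mult g k) = F g" if "k \<in> euc_gen d R'" for k
    using that
  proof (induction k rule: euc_gen.induct)
    case gen_id
    show ?case using euc_mult_id[OF E] by simp
  next
    case (gen_base r)
    then show ?case using inv by blast
  next
    case (gen_mult k1 k2)
    have k: "k1 \<in> G" "k2 \<in> G" using gen_mult.hyps R' by auto
    show ?case
    proof
      fix g assume g: "g \<in> G"
      have "F (euc_mult g (euc_mult k1 k2)) = F (euc_mult (euc_mult g k1) k2)"
        by (simp add: euc_mult_assoc[OF E[OF g] E[OF k(1)] E[OF k(2)]])
      also have "\<dots> = F g"
        using gen_mult.IH GD(3)[OF g k(1)] g by simp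
      finally show "F (euc_mult g (euc_mult k1 k2)) = F g" .
    qed
  next
    case (gen_inv k)
    have k: "k \<in> G" using gen_inv.hyps R' by auto
    show ?case
    proof
      fix g assume g: "g \<in> G"
      have "euc_mult (euc_mult g (euc_inv k)) k = g"
        by (simp add: euc_mult_assoc[OF E[OF g] E[OF GD(4)[OF k]] E[OF k]]
            euc_inv_left[OF E[OF k]] euc_mult_id[OF E[OF g]])
      then show "F (euc_mult g (euc_inv k)) = F g"
        using gen_inv.IH GD(3)[OF g GD(4)[OF k]] by metis
    qed
  qed
  then have "F (euc_mult (euc_id d) g) = F (euc_id d)" using g R' GD(2) by blast
  then show ?thesis using euc_id_mult[OF E[OF g]] by simp
qed

lemma inf_isometry_glue:
  assumes G: "euc_subgroup d G" and x0: "x0 \<in> carrier_vec d"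
    and R': "R' \<subseteq> G" "euc_id d \<in> R'" "euc_gen d R' = G"
    and R'': "property1 d G x0 R''"
    and R: "{euc_mult g h | g h. g \<in> R' \<and> h \<in> R''} \<subseteq> R"
    and local: "\<forall>g\<in>G. inf_isometry d x0 R (euc_mult g) (\<lambda>h. u (euc_mult g h))"
  shows "inf_isometry d x0 G (\<lambda>k. k) u"
proof -
  note GD = euc_subgroupD[OF G]
  have E: "g \<in> euc_group d" if "g \<in> G" for g using GD(1) that by blast
  have R''G: "R'' \<subseteq> G" and id_R'': "euc_id d \<in> R''"
    using R'' unfolding property1_def by auto
  have R''_R: "h \<in> R" if "h \<in> R''" for h
  proof -
    have "euc_mult (euc_id d) h \<in> R" using R R'(2) that by blast
    moreover have "euc_mult (euc_id d) h = h" using that R''G by (simp add: euc_id_mult E subsetD)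
    ultimately show ?thesis by simp
  qed
  define P where "P g p \<longleftrightarrow> fst p \<in> carrier_vec d \<and> snd p \<in> skew d \<and> (\<forall>h\<in>R.
      rot (euc_mult g h) *\<^sub>v u (euc_mult g h) = fst p + snd p *\<^sub>v (euc_act (euc_mult g h) x0 - x0))"
    for g p
  have "\<forall>g\<in>G. \<exists>p. P g p"
    using local unfolding inf_isometry_def P_def by fastforce
  from bchoice[OF this] obtain f where f: "\<forall>g\<in>G. P g (f g)" ..
  define A where "A g = fst (f g)" for g
  define W where "W g = snd (f g)" for g
  have A: "A g \<in> carrier_vec d" and W: "W g \<in> carrier_mat d d"
    and AW: "\<And>h. h \<in> R \<Longrightarrow>
      rot (euc_mult g h) *\<^sub>v u (euc_mult g h) = A g + W g *\<^sub>v (euc_act (euc_mult g h) x0 - x0)"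
    if "g \<in> G" for g
    using f that unfolding P_def A_def W_def skew_def by auto
  define F where "F g = restrict (\<lambda>k. A g + W g *\<^sub>v (euc_act k x0 - x0)) G" for g
  have "F (euc_mult g r) = F g" if g: "g \<in> G" and r: "r \<in> R'" for g r
  proof -
    have rG: "r \<in> G" using r R'(1) by blast
    have q: "euc_mult g r \<in> G" using GD(3)[OF g rG] .
    have "A (euc_mult g r) + W (euc_mult g r) *\<^sub>v (euc_act k x0 - x0) = A g + W g *\<^sub>v (euc_act k x0 - x0)"
      if k: "k \<in> G" for k
    proof (rule affine_maps_agree_on_orbit[OF G x0 R'' A[OF q] A[OF g] W[OF q] W[OF g] q _ k])
      fix h assume h: "h \<in> R''"
      have hG: "h \<in> G" using h R''G by blast
      have "euc_mult (euc_mult g r) h = euc_mult g (euc_mult r h)"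
        by (rule euc_mult_assoc[OF E[OF g] E[OF rG] E[OF hG]])
      moreover have "euc_mult r h \<in> R" using R r h by blast
      ultimately show "A (euc_mult g r) + W (euc_mult g r) *\<^sub>v (euc_act (euc_mult (euc_mult g r) h) x0 - x0)
          = A g + W g *\<^sub>v (euc_act (euc_mult (euc_mult g r) h) x0 - x0)"
        using AW[OF q R''_R[OF h]] AW[OF g] by metis
    qed
    then show ?thesis by (auto simp: F_def)
  qed
  then have F_const: "F k = F (euc_id d)" if "k \<in> G" for k
    using invariant_under_generators[OF G R'(3)] that by blast
  have id_R: "euc_id d \<in> R" using R''_R id_R'' .
  show ?thesis
    unfolding inf_isometry_def
  proof (intro bexI[of _ "A (euc_id d)"] bexI[of _ "W (euc_id d)"] ballI)
    fix k assume k: "k \<in> G"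
    have "rot k *\<^sub>v u k = A k + W k *\<^sub>v (euc_act k x0 - x0)"
      using AW[OF k id_R] by (simp add: euc_mult_id[OF E[OF k]])
    also have "\<dots> = A (euc_id d) + W (euc_id d) *\<^sub>v (euc_act k x0 - x0)"
      using fun_cong[OF F_const[OF k], of k] k by (simp add: F_def)
    finally show "rot k *\<^sub>v u k = A (euc_id d) + W (euc_id d) *\<^sub>v (euc_act k x0 - x0)" .
  next
    show "W (euc_id d) \<in> skew d" using f GD(2) unfolding P_def W_def by blast
  qed (use A GD(2) in auto)
qed

section \<open>Periodicity forces the block form\<close>

lemma euc_pow_fixed_translation:
  assumes t: "t \<in> euc_group d" and fixed: "fst t *\<^sub>v snd t = snd t"
  shows "snd (euc_pow d t n) = of_nat n \<cdot>\<^sub>v snd t \<and> fst (euc_pow d t n) *\<^sub>v snd t = snd t"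
proof (induction n)
  case 0
  then show ?case using euc_groupD(2)[OF t] by (auto simp: euc_id_def intro!: eq_vecI)
next
  case (Suc n)
  note T = euc_groupD(1,2)[OF t] and P = euc_groupD(1)[OF euc_pow_closed[OF t, of n]]
  have "snd t + fst t *\<^sub>v (of_nat n \<cdot>\<^sub>v snd t) = of_nat (Suc n) \<cdot>\<^sub>v snd t"
    using mult_mat_vec[OF T, of "of_nat n"] fixed T(2) by (intro eq_vecI) (auto simp: algebra_simps)
  moreover have "(fst t * fst (euc_pow d t n)) *\<^sub>v snd t = snd t"
    using T P Suc fixed by (simp add: assoc_mult_mat_vec[of _ d d _ d])
  ultimately show ?case using Suc by (simp add: euc_mult_def)
qed

lemma orthogonal_entry_abs_le:
  fixes Q :: "real mat"
  assumes Q: "Q \<in> carrier_mat d d" and QQ: "transpose_mat Q * Q = 1\<^sub>m d" and ij: "i < d" "j < d"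
  shows "\<bar>Q $$ (i, j)\<bar> \<le> 1"
proof -
  have "(transpose_mat Q * Q) $$ (j, j) = (\<Sum>k<d. (Q $$ (k, j))\<^sup>2)"
    using Q ij by (auto simp: scalar_prod_def lessThan_atLeast0 power2_eq_square intro!: sum.cong)
  then have "(\<Sum>k<d. (Q $$ (k, j))\<^sup>2) = 1" using QQ ij by simp
  moreover have "(Q $$ (i, j))\<^sup>2 \<le> (\<Sum>k<d. (Q $$ (k, j))\<^sup>2)"
    using ij by (intro member_le_sum) auto
  ultimately show ?thesis using abs_le_square_iff[of "Q $$ (i, j)" 1] by simp
qed

lemma abs_mult_mat_vec_index_le:
  fixes W :: "real mat"
  assumes W: "W \<in> carrier_mat d d" and v: "v \<in> carrier_vec d" and i: "i < d"
    and B: "\<forall>k<d. \<bar>v $ k\<bar> \<le> B"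
  shows "\<bar>(W *\<^sub>v v) $ i\<bar> \<le> (\<Sum>k<d. \<bar>W $$ (i, k)\<bar>) * B"
proof -
  have "\<bar>(W *\<^sub>v v) $ i\<bar> \<le> (\<Sum>k<d. \<bar>W $$ (i, k) * v $ k\<bar>)"
    unfolding index_mult_mat_vec_sum[OF W v i] by (rule sum_abs)
  also have "\<dots> \<le> (\<Sum>k<d. \<bar>W $$ (i, k)\<bar> * B)"
    using B by (intro sum_mono) (simp add: abs_mult mult_left_mono)
  finally show ?thesis by (simp add: sum_distrib_right)
qed

lemma abs_orthogonal_mult_vec_index_le:
  fixes Q :: "real mat"
  assumes Q: "Q \<in> carrier_mat d d" "transpose_mat Q * Q = 1\<^sub>m d" and v: "v \<in> carrier_vec d"
    and i: "i < d"
  shows "\<bar>(Q *\<^sub>v v) $ i\<bar> \<le> (\<Sum>k<d. \<bar>v $ k\<bar>)"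
proof -
  have "\<bar>(Q *\<^sub>v v) $ i\<bar> \<le> (\<Sum>k<d. \<bar>Q $$ (i, k) * v $ k\<bar>)"
    unfolding index_mult_mat_vec_sum[OF Q(1) v i] by (rule sum_abs)
  also have "\<dots> \<le> (\<Sum>k<d. \<bar>v $ k\<bar>)"
    using orthogonal_entry_abs_le[OF Q i]
    by (intro sum_mono) (simp add: abs_mult mult_left_le_one_le)
  finally show ?thesis .
qed

lemma bounded_multiples_eq_0:
  fixes x :: real
  assumes "\<And>n::nat. \<bar>of_nat n * x\<bar> \<le> B"
  shows "x = 0"
proof (rule ccontr)
  assume "x \<noteq> 0"
  obtain n :: nat where "of_nat n > B / \<bar>x\<bar>" using reals_Archimedean2 by blast
  with \<open>x \<noteq> 0\<close> have "\<bar>of_nat n * x\<bar> > B" by (simp add: field_simps abs_mult)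
  with assms[of n] show False by simp
qed

text \<open>\<open>M\<^sup>n\<close> translates by \<open>n \<cdot> snd M\<close>, so the right-hand side contains \<open>n \<cdot> W snd M\<close>, while
  the left-hand side stays bounded because every \<open>rot (M\<^sup>n)\<close> is orthogonal.\<close>

lemma rigid_on_powers_kills_translation:
  fixes W :: "real mat"
  assumes M: "M \<in> euc_group d" "fst M *\<^sub>v snd M = snd M" and x0: "x0 \<in> carrier_vec d"
    and W: "W \<in> carrier_mat d d" and a: "a \<in> carrier_vec d" and v: "v \<in> carrier_vec d"
    and rigid: "\<And>n. rot (euc_pow d M n) *\<^sub>v v = a + W *\<^sub>v (euc_act (euc_pow d M n) x0 - x0)"
  shows "W *\<^sub>v snd M = 0\<^sub>v d"
proof (rule eq_vecI)
  define s where "s = snd M"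
  have s: "s \<in> carrier_vec d" using euc_groupD(2)[OF M(1)] by (simp add: s_def)
  fix i assume "i < dim_vec (0\<^sub>v d :: real vec)"
  then have i: "i < d" by simp
  have "\<bar>of_nat n * (W *\<^sub>v s) $ i\<bar>
      \<le> (\<Sum>k<d. \<bar>v $ k\<bar>) + \<bar>a $ i\<bar> + (\<Sum>k<d. \<bar>W $$ (i, k)\<bar>) * (\<Sum>k<d. \<bar>x0 $ k\<bar>) + \<bar>(W *\<^sub>v x0) $ i\<bar>"
    for n
  proof -
    define Mn where "Mn = euc_pow d M n"
    note D = euc_groupD[OF euc_pow_closed[OF M(1), of n, folded Mn_def]]
    define p where "p = fst Mn *\<^sub>v x0"
    have p: "p \<in> carrier_vec d" using D x0 by (simp add: p_def)
    have "snd Mn = of_nat n \<cdot>\<^sub>v s"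
      using euc_pow_fixed_translation[OF M] by (simp add: Mn_def s_def)
    then have "W *\<^sub>v (euc_act Mn x0 - x0) = W *\<^sub>v p + of_nat n \<cdot>\<^sub>v (W *\<^sub>v s) - W *\<^sub>v x0"
      using W p s x0
      by (simp add: euc_act_def p_def mult_minus_distrib_mat_vec[of _ d d] mult_add_distrib_mat_vec[of _ d d]
          mult_mat_vec[OF W s])
    then have "of_nat n * (W *\<^sub>v s) $ i = (rot Mn *\<^sub>v v) $ i - a $ i - (W *\<^sub>v p) $ i + (W *\<^sub>v x0) $ i"
      using rigid[of n] W p s x0 a i by (simp add: Mn_def)
    moreover have "\<bar>(rot Mn *\<^sub>v v) $ i\<bar> \<le> (\<Sum>k<d. \<bar>v $ k\<bar>)"
      using abs_orthogonal_mult_vec_index_le[OF D(1,3) v i] by (simp add: rot_def)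
    moreover have "\<bar>(W *\<^sub>v p) $ i\<bar> \<le> (\<Sum>k<d. \<bar>W $$ (i, k)\<bar>) * (\<Sum>k<d. \<bar>x0 $ k\<bar>)"
      using abs_orthogonal_mult_vec_index_le[OF D(1,3) x0]
      by (intro abs_mult_mat_vec_index_le[OF W p i]) (simp add: p_def)
    ultimately show ?thesis by linarith
  qed
  then have "(W *\<^sub>v s) $ i = 0" by (rule bounded_multiples_eq_0)
  then show "(W *\<^sub>v snd M) $ i = 0\<^sub>v d $ i" using i by (simp add: s_def)
qed (use W in simp)

lemma sum_lessThan_add_split: "(\<Sum>k<m + (n::nat). f k) = (\<Sum>k<m. f k) + (\<Sum>k<n. f (m + k))"
  by (induction n) (auto simp: add.assoc)

lemma index_mult_mat_vec_zero_append:
  fixes W :: "real mat"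
  assumes W: "W \<in> carrier_mat n (d1 + d2)" and \<tau>: "\<tau> \<in> carrier_vec d2" and i: "i < n"
  shows "(W *\<^sub>v (0\<^sub>v d1 @\<^sub>v \<tau>)) $ i = (\<Sum>j<d2. W $$ (i, d1 + j) * \<tau> $ j)"
proof -
  have "(W *\<^sub>v (0\<^sub>v d1 @\<^sub>v \<tau>)) $ i = (\<Sum>k<d1 + d2. W $$ (i, k) * (0\<^sub>v d1 @\<^sub>v \<tau>) $ k)"
    using W \<tau> i by (intro index_mult_mat_vec_sum) auto
  also have "\<dots> = (\<Sum>j<d2. W $$ (i, d1 + j) * \<tau> $ j)"
    using \<tau> by (simp add: sum_lessThan_add_split)
  finally show ?thesis .
qed

lemma right_block_zero_if_kills_lattice:
  fixes W B :: "real mat"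
  assumes W: "W \<in> carrier_mat n (d1 + d2)" and B: "B \<in> carrier_mat d2 d2" "det B \<noteq> 0"
    and kills: "\<And>l. l < d2 \<Longrightarrow> W *\<^sub>v (0\<^sub>v d1 @\<^sub>v B *\<^sub>v unit_vec d2 l) = 0\<^sub>v n"
    and ij: "i < n" "j < d2"
  shows "W $$ (i, d1 + j) = 0"
proof -
  define Q where "Q = mat n d2 (\<lambda>(i, j). W $$ (i, d1 + j))"
  have Q: "Q \<in> carrier_mat n d2" by (simp add: Q_def)
  have QB: "Q * B = 0\<^sub>m n d2"
  proof (rule eq_matI)
    fix i l assume "i < dim_row (0\<^sub>m n d2 :: real mat)" "l < dim_col (0\<^sub>m n d2 :: real mat)"
    then have i: "i < n" and l: "l < d2" by auto
    have "(Q * B) $$ (i, l) = (\<Sum>j<d2. W $$ (i, d1 + j) * (B *\<^sub>v unit_vec d2 l) $ j)"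
      using Q B i l
      by (auto simp: scalar_prod_def lessThan_atLeast0 Q_def index_mult_mat_vec_sum[of _ d2 d2]
          if_distrib cong: if_cong intro!: sum.cong)
    also have "\<dots> = 0"
      using index_mult_mat_vec_zero_append[OF W _ i, of "B *\<^sub>v unit_vec d2 l"] kills[OF l] B(1) i
      by simp
    finally show "(Q * B) $$ (i, l) = 0\<^sub>m n d2 $$ (i, l)" using i l by simp
  qed (use Q B in auto)
  obtain B' where B': "B' \<in> carrier_mat d2 d2" "B * B' = 1\<^sub>m d2"
    using det_non_zero_imp_unit[OF B] unfolding Units_def ring_mat_simps by auto
  have "Q = (Q * B) * B'"
    using Q B B' by (simp add: assoc_mult_mat[of _ n d2 _ d2 _ d2])
  then have "Q = 0\<^sub>m n d2" using QB B' by simp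
  then show ?thesis using ij by (metis Q_def index_mat(1) index_zero_mat(1) case_prod_conv)
qed

lemma four_block_skew:
  fixes S :: "real mat"
  assumes "S \<in> skew d1"
  shows "four_block_mat S (0\<^sub>m d1 d2) (0\<^sub>m d2 d1) (0\<^sub>m d2 d2) \<in> skew (d1 + d2)"
proof -
  have S: "S \<in> carrier_mat d1 d1" and ST: "transpose_mat S = - S" using assms by (auto simp: skew_def)
  have anti: "S $$ (j, i) = - S $$ (i, j)" if "i < d1" "j < d1" for i j
    using that S arg_cong[OF ST, of "\<lambda>M. M $$ (i, j)"] by simp
  have "transpose_mat (four_block_mat S (0\<^sub>m d1 d2) (0\<^sub>m d2 d1) (0\<^sub>m d2 d2))
      = - four_block_mat S (0\<^sub>m d1 d2) (0\<^sub>m d2 d1) (0\<^sub>m d2 d2)"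
  proof (rule eq_matI)
    fix i j assume "i < dim_row (- four_block_mat S (0\<^sub>m d1 d2) (0\<^sub>m d2 d1) (0\<^sub>m d2 (d2::nat)))"
      "j < dim_col (- four_block_mat S (0\<^sub>m d1 d2) (0\<^sub>m d2 d1) (0\<^sub>m d2 (d2::nat)))"
    then have "i < d1 + d2" "j < d1 + d2" using S by auto
    then show "transpose_mat (four_block_mat S (0\<^sub>m d1 d2) (0\<^sub>m d2 d1) (0\<^sub>m d2 d2)) $$ (i, j)
        = (- four_block_mat S (0\<^sub>m d1 d2) (0\<^sub>m d2 d1) (0\<^sub>m d2 d2)) $$ (i, j)"
      using S anti[of i j] by auto
  qed (use S in auto)
  then show ?thesis using S unfolding skew_def by simp
qed

lemma skew_eq_four_block_if_right_block_zero:
  fixes W :: "real mat"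
  assumes W: "W \<in> skew (d1 + d2)" and zero: "\<And>i j. i < d1 + d2 \<Longrightarrow> j < d2 \<Longrightarrow> W $$ (i, d1 + j) = 0"
  shows "\<exists>S\<in>skew d1. W = four_block_mat S (0\<^sub>m d1 d2) (0\<^sub>m d2 d1) (0\<^sub>m d2 d2)"
proof -
  have Wc: "W \<in> carrier_mat (d1 + d2) (d1 + d2)" and WT: "transpose_mat W = - W"
    using W by (auto simp: skew_def)
  have anti: "W $$ (j, i) = - W $$ (i, j)" if "i < d1 + d2" "j < d1 + d2" for i j
    using that Wc arg_cong[OF WT, of "\<lambda>M. M $$ (i, j)"] by simp
  have right: "W $$ (i, j) = 0" if "i < d1 + d2" "d1 \<le> j" "j < d1 + d2" for i j
    using zero[of i "j - d1"] that by (simp add: le_add_diff_inverse)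
  define S where "S = mat d1 d1 (\<lambda>(i, j). W $$ (i, j))"
  have "transpose_mat S = - S"
  proof (rule eq_matI)
    fix i j assume "i < dim_row (- S)" "j < dim_col (- S)"
    then have "i < d1" "j < d1" by (auto simp: S_def)
    then show "transpose_mat S $$ (i, j) = (- S) $$ (i, j)"
      using anti[of i j] by (simp add: S_def)
  qed (auto simp: S_def)
  then have "S \<in> skew d1" unfolding skew_def by (simp add: S_def)
  moreover have "W = four_block_mat S (0\<^sub>m d1 d2) (0\<^sub>m d2 d1) (0\<^sub>m d2 d2)"
  proof (rule eq_matI)
    fix i j assume "i < dim_row (four_block_mat S (0\<^sub>m d1 d2) (0\<^sub>m d2 d1) (0\<^sub>m d2 d2))"
      "j < dim_col (four_block_mat S (0\<^sub>m d1 d2) (0\<^sub>m d2 d1) (0\<^sub>m d2 d2))"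
    then have i: "i < d1 + d2" and j: "j < d1 + d2" by (auto simp: S_def)
    show "W $$ (i, j) = four_block_mat S (0\<^sub>m d1 d2) (0\<^sub>m d2 d1) (0\<^sub>m d2 d2) $$ (i, j)"
      using right[OF i _ j] right[OF j _ i] anti[OF i j] i j by (auto simp: S_def)
  qed (use Wc in \<open>auto simp: S_def\<close>)
  ultimately show ?thesis by blast
qed

lemma proj2_dsum:
  assumes "A \<in> carrier_mat d1 d1" "s \<in> euc_group d2"
  shows "proj2 d1 d2 (dsum d1 d2 A s) = s"
  using assms euc_groupD(1,2)[OF assms(2)]
  by (cases s) (auto simp: proj2_def dsum_def intro!: eq_matI eq_vecI)

lemma standing_settingD:
  assumes "standing_setting d1 d2 S G T m0 C x0 daff"
  shows "space_group d2 S" "euc_subgroup (d1 + d2) G"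
    "G \<subseteq> {dsum d1 d2 A s | A s. A \<in> orth_group d1 \<and> s \<in> S}"
    "T \<subseteq> G" "bij_betw (proj2 d1 d2) T (transl_subgroup d2 S)" "x0 \<in> carrier_vec (d1 + d2)"
    "\<And>N. N \<ge> 1 \<Longrightarrow> m0 dvd N \<Longrightarrow> euc_normal (d1 + d2) (pow_set (d1 + d2) T N) G"
    "\<And>N. N \<ge> 1 \<Longrightarrow> m0 dvd N \<Longrightarrow> C N \<subseteq> G \<and> finite (C N)
       \<and> (\<forall>g\<in>G. \<exists>!c\<in>C N. \<exists>t\<in>pow_set (d1 + d2) T N. g = euc_mult c t)"
  using assms by (simp_all add: standing_setting_def euc_discrete_subgroup_def)

lemma space_group_subset: "space_group n S \<Longrightarrow> S \<subseteq> euc_group n"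
  by (simp add: space_group_def euc_discrete_subgroup_def euc_subgroup_def)

lemma lattice_translation_lift:
  assumes setting: "standing_setting d1 d2 S G T m0 C x0 daff"
    and \<tau>: "\<tau> \<in> snd ` transl_subgroup d2 S"
  shows "\<exists>t\<in>T. snd t = 0\<^sub>v d1 @\<^sub>v \<tau> \<and> fst t *\<^sub>v snd t = snd t"
proof -
  note setting = standing_settingD[OF setting]
  have S: "S \<subseteq> euc_group d2" using space_group_subset[OF setting(1)] .
  obtain s where s: "s \<in> S" "fst s = 1\<^sub>m d2" "snd s = \<tau>"
    using \<tau> unfolding transl_subgroup_def by auto
  have "s \<in> proj2 d1 d2 ` T"
    using setting(5) s unfolding bij_betw_def transl_subgroup_def by auto
  then obtain t where t: "t \<in> T" "proj2 d1 d2 t = s" by blast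
  have "t \<in> {dsum d1 d2 A s | A s. A \<in> orth_group d1 \<and> s \<in> S}"
    using setting(3,4) t(1) by blast
  then obtain A s' where ts': "t = dsum d1 d2 A s'" and A: "A \<in> carrier_mat d1 d1" and s': "s' \<in> S"
    unfolding orth_group_def by blast
  have "s' = s"
    using proj2_dsum[OF A, of s'] s' S t(2) ts' by (simp add: subsetD)
  then have ft: "fst t = four_block_mat A (0\<^sub>m d1 d2) (0\<^sub>m d2 d1) (1\<^sub>m d2)" and st: "snd t = 0\<^sub>v d1 @\<^sub>v \<tau>"
    using s ts' by (simp_all add: dsum_def)
  have "\<tau> \<in> carrier_vec d2" using euc_groupD(2)[of s d2] S s by (simp add: subsetD)
  then have "fst t *\<^sub>v snd t = snd t"
    unfolding ft st using mult_mat_vec_split[OF A one_carrier_mat zero_carrier_vec, of \<tau>] A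
    by (auto intro!: eq_vecI)
  with t(1) st show ?thesis by blast
qed

lemma periodic_eq_at_id:
  assumes "periodic d G T N u" "euc_id d \<in> G" "t \<in> pow_set d T N" "t \<in> euc_group d"
  shows "u t = u (euc_id d)"
  using assms euc_id_mult[OF assms(4)] unfolding periodic_def by metis

lemma smult_vec_eq_0:
  assumes "(r :: 'a :: field) \<noteq> 0" "v \<in> carrier_vec n" "r \<cdot>\<^sub>v v = 0\<^sub>v n"
  shows "v = 0\<^sub>v n"
proof (rule eq_vecI)
  fix i assume i: "i < dim_vec (0\<^sub>v n :: 'a vec)"
  have "r * v $ i = (r \<cdot>\<^sub>v v) $ i" using i assms(2) by simp
  also have "\<dots> = 0" using i assms(3) by simp
  finally show "v $ i = 0\<^sub>v n $ i" using i assms(1) by simp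
qed (use assms(2) in simp)

lemma periodic_inf_isometry_kills_lattice:
  fixes W :: "real mat"
  assumes setting: "standing_setting d1 d2 S G T m0 C x0 daff"
    and N: "N \<ge> 1" "m0 dvd N" and per: "periodic (d1 + d2) G T N u"
    and a: "a \<in> carrier_vec (d1 + d2)" and W: "W \<in> carrier_mat (d1 + d2) (d1 + d2)"
    and rigid: "\<forall>k\<in>G. rot k *\<^sub>v u k = a + W *\<^sub>v (euc_act k x0 - x0)"
    and \<tau>: "\<tau> \<in> snd ` transl_subgroup d2 S"
  shows "W *\<^sub>v (0\<^sub>v d1 @\<^sub>v \<tau>) = 0\<^sub>v (d1 + d2)"
proof -
  define K where "K = pow_set (d1 + d2) T N"
  have G: "euc_subgroup (d1 + d2) G" and T: "T \<subseteq> G" and x0: "x0 \<in> carrier_vec (d1 + d2)"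
    and "euc_normal (d1 + d2) K G"
    using standing_settingD[OF setting] N by (simp_all add: K_def)
  then have K: "euc_subgroup (d1 + d2) K" "K \<subseteq> G" unfolding euc_normal_def by auto
  note GD = euc_subgroupD[OF G]
  obtain t where t: "t \<in> T" "snd t = 0\<^sub>v d1 @\<^sub>v \<tau>" "fst t *\<^sub>v snd t = snd t"
    using lattice_translation_lift[OF setting \<tau>] by blast
  have tE: "t \<in> euc_group (d1 + d2)" using t(1) T GD(1) by blast
  define M where "M = euc_pow (d1 + d2) t N"
  have M: "M \<in> K" unfolding K_def pow_set_def M_def using t(1) by blast
  have ME: "M \<in> euc_group (d1 + d2)" using euc_pow_closed[OF tE] by (simp add: M_def)
  have sM: "snd M = of_nat N \<cdot>\<^sub>v snd t" and "fst M *\<^sub>v snd t = snd t"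
    using euc_pow_fixed_translation[OF tE t(3)] by (simp_all add: M_def)
  then have M_fixed: "fst M *\<^sub>v snd M = snd M"
    using mult_mat_vec[OF euc_groupD(1)[OF ME] euc_groupD(2)[OF tE]] by simp
  have "rot (euc_pow (d1 + d2) M n) *\<^sub>v u (euc_id (d1 + d2))
      = a + W *\<^sub>v (euc_act (euc_pow (d1 + d2) M n) x0 - x0)" for n
  proof -
    have Mn: "euc_pow (d1 + d2) M n \<in> K" using euc_subgroup_pow_closed[OF K(1) M] .
    then have "rot (euc_pow (d1 + d2) M n) *\<^sub>v u (euc_pow (d1 + d2) M n)
        = a + W *\<^sub>v (euc_act (euc_pow (d1 + d2) M n) x0 - x0)"
      using rigid K(2) by blast
    then show ?thesis
      using periodic_eq_at_id[OF per GD(2) Mn[unfolded K_def] euc_pow_closed[OF ME]] by simp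
  qed
  then have "W *\<^sub>v snd M = 0\<^sub>v (d1 + d2)"
    using per GD(2) unfolding periodic_def
    by (intro rigid_on_powers_kills_translation[OF ME M_fixed x0 W a]) auto
  then have NW: "real N \<cdot>\<^sub>v (W *\<^sub>v (0\<^sub>v d1 @\<^sub>v \<tau>)) = 0\<^sub>v (d1 + d2)"
    using sM t(2) mult_mat_vec[OF W euc_groupD(2)[OF tE]] by simp
  have "real N \<noteq> 0" using N(1) by simp
  moreover have "W *\<^sub>v (0\<^sub>v d1 @\<^sub>v \<tau>) \<in> carrier_vec (d1 + d2)"
    using carrier_matD(1)[OF W] by (intro carrier_vecI) simp
  ultimately show ?thesis using NW by (rule smult_vec_eq_0)
qed

lemma periodic_inf_isometry_skew_block:
  fixes W :: "real mat"
  assumes setting: "standing_setting d1 d2 S G T m0 C x0 daff"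
    and N: "N \<ge> 1" "m0 dvd N" and per: "periodic (d1 + d2) G T N u"
    and a: "a \<in> carrier_vec (d1 + d2)" and W: "W \<in> skew (d1 + d2)"
    and rigid: "\<forall>k\<in>G. rot k *\<^sub>v u k = a + W *\<^sub>v (euc_act k x0 - x0)"
  shows "\<exists>S1\<in>skew d1. W = four_block_mat S1 (0\<^sub>m d1 d2) (0\<^sub>m d2 d1) (0\<^sub>m d2 d2)"
proof -
  obtain B where B: "B \<in> carrier_mat d2 d2" "det B \<noteq> 0"
    and lattice: "snd ` transl_subgroup d2 S = {B *\<^sub>v z | z. z \<in> carrier_vec d2 \<and> (\<forall>i<d2. z $ i \<in> \<int>)}"
    using standing_settingD(1)[OF setting] unfolding space_group_def by blast
  have Wc: "W \<in> carrier_mat (d1 + d2) (d1 + d2)" using W by (simp add: skew_def)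
  have "W *\<^sub>v (0\<^sub>v d1 @\<^sub>v B *\<^sub>v unit_vec d2 l) = 0\<^sub>v (d1 + d2)" if l: "l < d2" for l
  proof (rule periodic_inf_isometry_kills_lattice[OF setting N per a Wc rigid])
    show "B *\<^sub>v unit_vec d2 l \<in> snd ` transl_subgroup d2 S"
      unfolding lattice using l by (auto simp: unit_vec_def)
  qed
  then show ?thesis
    by (intro skew_eq_four_block_if_right_block_zero[OF W] right_block_zero_if_kills_lattice[OF Wc B])
qed

lemma periodic_conj_translate:
  assumes G: "euc_subgroup d G" and K: "euc_normal d K G"
    and per: "\<forall>g\<in>G. \<forall>t\<in>K. u (euc_mult g t) = u g"
    and c: "c \<in> G" and t: "t \<in> K" and h: "h \<in> G"
  shows "u (euc_mult (euc_mult c t) h) = u (euc_mult c h)"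
proof -
  note GD = euc_subgroupD[OF G]
  have E: "g \<in> euc_group d" if "g \<in> G" for g using GD(1) that by blast
  have tG: "t \<in> G" using K t unfolding euc_normal_def by blast
  define t' where "t' = euc_mult (euc_mult (euc_inv h) t) h"
  have "euc_mult (euc_mult (euc_inv h) t) (euc_inv (euc_inv h)) \<in> K"
    using K GD(4)[OF h] t unfolding euc_normal_def by blast
  then have t': "t' \<in> K" using euc_inv_inv[OF E[OF h]] by (simp add: t'_def)
  have hi: "euc_inv h \<in> G" using GD(4)[OF h] .
  have x: "euc_mult (euc_inv h) t \<in> G" using GD(3)[OF hi tG] .
  have "euc_mult (euc_mult c h) t' = euc_mult c (euc_mult h t')"
    using euc_mult_assoc[OF E[OF c] E[OF h] E] t' K unfolding euc_normal_def by blast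
  also have "euc_mult h t' = euc_mult (euc_mult h (euc_mult (euc_inv h) t)) h"
    unfolding t'_def using euc_mult_assoc[OF E[OF h] E[OF x] E[OF h]] by simp
  also have "euc_mult h (euc_mult (euc_inv h) t) = t"
    using euc_mult_assoc[OF E[OF h] E[OF hi] E[OF tG]] euc_inv_right[OF E[OF h]] euc_id_mult[OF E[OF tG]]
    by simp
  also have "euc_mult c (euc_mult t h) = euc_mult (euc_mult c t) h"
    using euc_mult_assoc[OF E[OF c] E[OF tG] E[OF h]] by simp
  finally have "euc_mult (euc_mult c h) t' = euc_mult (euc_mult c t) h" .
  then show ?thesis using per GD(3)[OF c h] t' by metis
qed

lemma seminorm_R_eq_0_iff:
  assumes C: "finite C" "C \<noteq> {}" and R: "finite R" "R \<subseteq> euc_group d" and x0: "x0 \<in> carrier_vec d"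
    and u: "\<forall>g\<in>C. \<forall>h\<in>R. u (euc_mult g h) \<in> carrier_vec d"
  shows "seminorm_R d x0 R C N u = 0 \<longleftrightarrow> (\<forall>g\<in>C. (\<lambda>h. u (euc_mult g h)) \<in> U_iso d x0 R)"
proof -
  have "seminorm_R d x0 R C N u = 0 \<longleftrightarrow> (\<Sum>g\<in>C. (dist_Uiso d x0 R (\<lambda>h. u (euc_mult g h)))\<^sup>2) = 0"
    using C by (simp add: seminorm_R_def sum_nonneg)
  also have "\<dots> \<longleftrightarrow> (\<forall>g\<in>C. dist_Uiso d x0 R (\<lambda>h. u (euc_mult g h)) = 0)"
    using C(1) by (simp add: sum_nonneg_eq_0_iff)
  also have "\<dots> \<longleftrightarrow> (\<forall>g\<in>C. (\<lambda>h. u (euc_mult g h)) \<in> U_iso d x0 R)"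
    using dist_Uiso_eq_0_iff[OF R x0] u by simp
  finally show ?thesis .
qed

lemma periodic_translates_in_U_iso:
  assumes setting: "standing_setting d1 d2 S G T m0 C x0 daff"
    and N: "N \<ge> 1" "m0 dvd N" and per: "periodic (d1 + d2) G T N u" and R: "R \<subseteq> G"
    and translates: "\<forall>c\<in>C N. (\<lambda>h. u (euc_mult c h)) \<in> U_iso (d1 + d2) x0 R"
    and g: "g \<in> G"
  shows "(\<lambda>h. u (euc_mult g h)) \<in> U_iso (d1 + d2) x0 R"
proof -
  note setting = standing_settingD[OF setting]
  obtain c t where c: "c \<in> C N" and t: "t \<in> pow_set (d1 + d2) T N" and gct: "g = euc_mult c t"
    using setting(8)[OF N] g by blast
  have "c \<in> G" using c setting(8)[OF N] by blast
  have "u (euc_mult g h) = u (euc_mult c h)" if "h \<in> R" for h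
    unfolding gct using per R that \<open>c \<in> G\<close>
    by (intro periodic_conj_translate[OF setting(2) setting(7)[OF N] _ \<open>c \<in> G\<close> t])
      (auto simp: periodic_def)
  then show ?thesis
    using translates c unfolding U_iso_def by auto
qed

lemma translates_in_U_iso_imp_U_iso00:
  assumes setting: "standing_setting d1 d2 S G T m0 C x0 daff"
    and R: "property2 (d1 + d2) G x0 R"
    and N: "N \<ge> 1" "m0 dvd N" and per: "periodic (d1 + d2) G T N u"
    and translates: "\<forall>c\<in>C N. (\<lambda>h. u (euc_mult c h)) \<in> U_iso (d1 + d2) x0 R"
  shows "u \<in> U_iso00 d1 d2 x0 G"
proof -
  note setting' = standing_settingD[OF setting]
  note GD = euc_subgroupD[OF setting'(2)]
  obtain R' R'' where R': "R' \<subseteq> G" "euc_id (d1 + d2) \<in> R'" "euc_gen (d1 + d2) R' = G"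
    and R'': "property1 (d1 + d2) G x0 R''"
    and RR: "{euc_mult g h | g h. g \<in> R' \<and> h \<in> R''} \<subseteq> R" and RG: "R \<subseteq> G"
    using R unfolding property2_def by blast
  have u: "\<forall>g\<in>G. u g \<in> carrier_vec (d1 + d2)"
    using per unfolding periodic_def by auto
  have "inf_isometry (d1 + d2) x0 R (euc_mult g) (\<lambda>h. u (euc_mult g h))" if g: "g \<in> G" for g
    using periodic_translates_in_U_iso[OF setting N per RG translates g]
      translate_in_U_iso_iff[of g "d1 + d2" R x0 u] g RG GD(1,3) u setting'(6) by blast
  then have "inf_isometry (d1 + d2) x0 G (\<lambda>k. k) u"
    by (intro inf_isometry_glue[OF setting'(2,6) R' R'' RR]) blast
  then obtain a W where a: "a \<in> carrier_vec (d1 + d2)" and W: "W \<in> skew (d1 + d2)"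
    and rigid: "\<forall>k\<in>G. rot k *\<^sub>v u k = a + W *\<^sub>v (euc_act k x0 - x0)"
    unfolding inf_isometry_def by blast
  obtain S1 where "S1 \<in> skew d1" "W = four_block_mat S1 (0\<^sub>m d1 d2) (0\<^sub>m d2 d1) (0\<^sub>m d2 d2)"
    using periodic_inf_isometry_skew_block[OF setting N per a W rigid] by blast
  with a u rigid show ?thesis unfolding U_iso00_def by blast
qed

lemma U_iso00_imp_translates_in_U_iso:
  assumes G: "euc_subgroup (d1 + d2) G" and R: "R \<subseteq> G" and x0: "x0 \<in> carrier_vec (d1 + d2)"
    and u: "u \<in> U_iso00 d1 d2 x0 G" and g: "g \<in> G"
  shows "(\<lambda>h. u (euc_mult g h)) \<in> U_iso (d1 + d2) x0 R"
proof -
  note GD = euc_subgroupD[OF G]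
  obtain a S1 where a: "a \<in> carrier_vec (d1 + d2)" and S1: "S1 \<in> skew d1"
    and u_carrier: "\<forall>k\<in>G. u k \<in> carrier_vec (d1 + d2)"
    and rigid: "\<forall>k\<in>G. rot k *\<^sub>v u k
      = a + four_block_mat S1 (0\<^sub>m d1 d2) (0\<^sub>m d2 d1) (0\<^sub>m d2 d2) *\<^sub>v (euc_act k x0 - x0)"
    using u unfolding U_iso00_def by blast
  have gR: "euc_mult g h \<in> G" if "h \<in> R" for h using GD(3)[OF g] R that by blast
  have "inf_isometry (d1 + d2) x0 R (euc_mult g) (\<lambda>h. u (euc_mult g h))"
    unfolding inf_isometry_def using a four_block_skew[OF S1] rigid gR by blast
  then show ?thesis
    using translate_in_U_iso_iff[of g "d1 + d2" R x0 u] g R GD(1) x0 u_carrier gR by blast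
qed

theorem theorem3p27:
  assumes setting: "standing_setting d1 d2 S G T m0 C x0 daff"
    and R: "property2 (d1 + d2) G x0 R"
  shows "\<forall>N u. N \<ge> 1 \<and> m0 dvd N \<and> periodic (d1 + d2) G T N u \<longrightarrow>
           (seminorm_R (d1 + d2) x0 R (C N) N u = 0 \<longleftrightarrow>
              u \<in> U_iso00 d1 d2 x0 G \<inter> U_per (d1 + d2) G T m0)"
proof (intro allI impI, elim conjE)
  fix N u assume N: "N \<ge> 1" "m0 dvd N" and per: "periodic (d1 + d2) G T N u"
  note S = standing_settingD[OF setting]
  have C: "finite (C N)" "C N \<noteq> {}" "C N \<subseteq> G"
    using S(8)[OF N] euc_subgroupD(2)[OF S(2)] by blast+
  have RG: "R \<subseteq> G" and "finite R" using R unfolding property2_def by blast+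
  have "\<forall>c\<in>C N. \<forall>h\<in>R. u (euc_mult c h) \<in> carrier_vec (d1 + d2)"
    using per C(3) RG euc_subgroupD(3)[OF S(2)] unfolding periodic_def by blast
  moreover have "R \<subseteq> euc_group (d1 + d2)" using RG euc_subgroupD(1)[OF S(2)] by blast
  ultimately have "seminorm_R (d1 + d2) x0 R (C N) N u = 0
      \<longleftrightarrow> (\<forall>c\<in>C N. (\<lambda>h. u (euc_mult c h)) \<in> U_iso (d1 + d2) x0 R)"
    using seminorm_R_eq_0_iff[OF C(1,2) \<open>finite R\<close> _ S(6)] by blast
  also have "\<dots> \<longleftrightarrow> u \<in> U_iso00 d1 d2 x0 G"
    using translates_in_U_iso_imp_U_iso00[OF setting R N per]
      U_iso00_imp_translates_in_U_iso[OF S(2) RG S(6)] C(3) by blast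
  moreover have "u \<in> U_per (d1 + d2) G T m0" using N per unfolding U_per_def by blast
  ultimately show "seminorm_R (d1 + d2) x0 R (C N) N u = 0
      \<longleftrightarrow> u \<in> U_iso00 d1 d2 x0 G \<inter> U_per (d1 + d2) G T m0" by blast
qed

end
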